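(* Let $K>0$ and $r\in\{2,\infty\}$. Let $Z_1,\dots,Z_n$ be i.i.d. $\mathrm N_k(0,D)$ random vectors with $\max\{\|D^{-1}\|_{(r,r)},\|D\|_{(r,r)}\}\le K$, and let $S_n=n^{-1}\sum_{i=1}^nZ_iZ_i^T$. Then for every $M>K$ there exist constants $M',m>0$ depending only on $M$ and $K$ such that for all $n,k$, $$\mathrm P\big[\|S_n^{-1}\|_{(r,r)}\ge M\big]\le M'k^2\exp(-mnk^{-2}),$$ where the event includes the case that $S_n$ is singular.
   Context: For a $k\times k$ matrix $A$, $\|A\|_{(r,r)}=\sup\{\|Ax\|_r:\|x\|_r=1\}$; so $\|A\|_{(\infty,\infty)}=\max_i\sum_j|a_{ij}|$ and $\|A\|_{(2,2)}$ is the spectral norm. *)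

theory Defs
  imports "HOL-Probability.Probability" "Jordan_Normal_Form.Gauss_Jordan_Elimination" "Jordan_Normal_Form.Determinant"
begin

definition vnorm :: "ereal \<Rightarrow> real vec \<Rightarrow> real" where
  "vnorm r x = (if r = \<infinity> then Max (insert 0 {\<bar>x $ i\<bar> | i. i < dim_vec x})
               else (\<Sum>i<dim_vec x. \<bar>x $ i\<bar> powr real_of_ereal r) powr (1 / real_of_ereal r))"

definition opnorm :: "ereal \<Rightarrow> real mat \<Rightarrow> real" where
  "opnorm r A = Sup {vnorm r (A *\<^sub>v x) | x. x \<in> carrier_vec (dim_col A) \<and> vnorm r x = 1}"

definition sym_posdef :: "nat \<Rightarrow> real mat \<Rightarrow> bool" where
  "sym_posdef k D \<longleftrightarrow> D \<in> carrier_mat k k \<and> transpose_mat D = D \<and>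
     (\<forall>x \<in> carrier_vec k. x \<noteq> 0\<^sub>v k \<longrightarrow> (\<Sum>i<k. \<Sum>j<k. x $ i * D $$ (i, j) * x $ j) > 0)"

text \<open>The k-variate normal distribution N_k(0,D) (D positive definite), as a measure on
  nat \<Rightarrow> real (coordinates 0..<k), given by its Lebesgue density.\<close>
definition mvnormal :: "nat \<Rightarrow> real mat \<Rightarrow> (nat \<Rightarrow> real) measure" where
  "mvnormal k D = density (PiM {..<k} (\<lambda>_. lborel))
     (\<lambda>x. ennreal (exp (- (1/2) * (\<Sum>i<k. \<Sum>j<k. x i * the (mat_inverse D) $$ (i, j) * x j))
                   / sqrt ((2 * pi) ^ k * Determinant.det D)))"

text \<open>Sample covariance S_n = n^{-1} \<Sum>_{i<n} Z_i Z_i^T, where Z_i = w i.\<close>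
definition sample_cov :: "nat \<Rightarrow> nat \<Rightarrow> (nat \<Rightarrow> nat \<Rightarrow> real) \<Rightarrow> real mat" where
  "sample_cov n k w = Matrix.mat k k (\<lambda>(a, b). (1 / real n) * (\<Sum>i<n. w i a * w i b))"

definition iid_mvnormal :: "nat \<Rightarrow> nat \<Rightarrow> real mat \<Rightarrow> (nat \<Rightarrow> nat \<Rightarrow> real) measure" where
  "iid_mvnormal n k D = PiM {..<n} (\<lambda>_. mvnormal k D)"

definition bad_event :: "ereal \<Rightarrow> real \<Rightarrow> nat \<Rightarrow> nat \<Rightarrow> (nat \<Rightarrow> nat \<Rightarrow> real) set" where
  "bad_event r M n k = {w. case mat_inverse (sample_cov n k w) of
                            None \<Rightarrow> True | Some Sinv \<Rightarrow> opnorm r Sinv \<ge> M}"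

end

theory Submission
  imports Defs
begin

text \<open>
  By polarization the entries of \<open>S\<^sub>n\<close> are determined by the sums of squares of the one-dimensional
  Gaussians \<open>\<langle>e\<^sub>a \<plusminus> e\<^sub>b, Z\<^sub>i\<rangle>\<close>, whose variances are at most \<open>4 K\<close>. Their moment generating functions
  are explicit (Hubbard--Stratonovich), so by Chernoff bounds each of these \<open>2 k\<^sup>2\<close> sums deviates
  from its mean by more than \<open>n t\<close> with probability \<open>O (exp (- c n t\<^sup>2))\<close>. Outside these events
  \<open>S\<^sub>n\<close> is entrywise \<open>t/2\<close>-close to \<open>D\<close>, so \<open>\<parallel>y\<parallel> \<le> K \<parallel>D y\<parallel> \<le> K (\<parallel>S\<^sub>n y\<parallel> + k t/2 \<parallel>y\<parallel>)\<close>;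
  with \<open>t \<sim> 1/k\<close> small enough this makes \<open>S\<^sub>n\<close> invertible with \<open>\<parallel>S\<^sub>n\<^sup>-\<^sup>1\<parallel> < M\<close>.
\<close>

section \<open>Quadratic forms and Schur complements\<close>

definition quad_form :: "nat \<Rightarrow> real mat \<Rightarrow> (nat \<Rightarrow> real) \<Rightarrow> real" where
  "quad_form k A x = (\<Sum>i<k. \<Sum>j<k. x i * A$$(i,j) * x j)"

definition schur_compl :: "nat \<Rightarrow> real mat \<Rightarrow> real mat" where
  "schur_compl k A = mat k k (\<lambda>(i,j). A$$(i,j) - A$$(i,k) * A$$(k,j) / A$$(k,k))"

lemma sym_posdef_iff:
  "sym_posdef k A \<longleftrightarrow> A \<in> carrier_mat k k \<and> (\<forall>i<k. \<forall>j<k. A$$(i,j) = A$$(j,i)) \<and>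
     (\<forall>x. (\<exists>i<k. x i \<noteq> 0) \<longrightarrow> quad_form k A x > 0)"
proof -
  have sym: "transpose_mat A = A \<longleftrightarrow> (\<forall>i<k. \<forall>j<k. A$$(i,j) = A$$(j,i))"
    if "A \<in> carrier_mat k k"
    using that by (auto simp: mat_eq_iff)
  have pos: "(\<forall>x \<in> carrier_vec k. x \<noteq> 0\<^sub>v k \<longrightarrow> (\<Sum>i<k. \<Sum>j<k. x $ i * A $$ (i, j) * x $ j) > 0)
      \<longleftrightarrow> (\<forall>x. (\<exists>i<k. x i \<noteq> 0) \<longrightarrow> quad_form k A x > 0)"
  proof safe
    fix x :: "nat \<Rightarrow> real" and i assume "\<forall>x \<in> carrier_vec k. x \<noteq> 0\<^sub>v k \<longrightarrow> (\<Sum>i<k. \<Sum>j<k. x $ i * A $$ (i, j) * x $ j) > 0"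
      and "i < k" "x i \<noteq> 0"
    then show "quad_form k A x > 0"
      using \<open>i < k\<close> \<open>x i \<noteq> 0\<close> by (auto simp: quad_form_def vec_eq_iff dest!: bspec[of _ _ "vec k x"])
  next
    fix x :: "real vec" assume "\<forall>x. (\<exists>i<k. x i \<noteq> 0) \<longrightarrow> quad_form k A x > 0"
      and "x \<in> carrier_vec k" "x \<noteq> 0\<^sub>v k"
    then show "(\<Sum>i<k. \<Sum>j<k. x $ i * A $$ (i, j) * x $ j) > 0"
      by (auto simp: quad_form_def vec_eq_iff)
  qed
  show ?thesis unfolding sym_posdef_def using sym pos by blast
qed

lemma quad_form_nonneg:
  assumes "sym_posdef k A"
  shows "0 \<le> quad_form k A x"
proof (cases "\<exists>i<k. x i \<noteq> 0")
  case True then show ?thesis using assms by (auto simp: sym_posdef_iff less_imp_le)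
next
  case False then show ?thesis unfolding quad_form_def by simp
qed

lemma sym_posdef_diag_pos:
  assumes "sym_posdef k A" "i < k"
  shows "A$$(i,i) > 0"
proof -
  have "quad_form k A (\<lambda>j. if j = i then 1 else 0) > 0"
    using assms by (auto simp: sym_posdef_iff)
  then show ?thesis
    using assms(2) unfolding quad_form_def
    by (simp add: if_distrib[where f="\<lambda>x. x * _"] if_distrib[where f="\<lambda>x. _ * x"] cong: if_cong)
qed

lemma sym_posdef_inverse:
  assumes D: "sym_posdef k D" and inv: "mat_inverse D = Some Di"
  shows "sym_posdef k Di"
proof -
  have Dc: "D \<in> carrier_mat k k" and DT: "transpose_mat D = D" using D by (auto simp: sym_posdef_def)
  have DDi: "D * Di = 1\<^sub>m k" "Di * D = 1\<^sub>m k" and Dic: "Di \<in> carrier_mat k k"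
    using mat_inverse(2)[OF Dc inv] by auto
  have "transpose_mat Di = transpose_mat Di * (D * Di)" using DDi Dic by simp
  also have "\<dots> = transpose_mat (D * Di) * Di"
    using DT Dc Dic by (simp add: transpose_mult assoc_mult_mat[of _ k k D k Di k])
  also have "\<dots> = Di" using DDi Dic by simp
  finally have DiT: "transpose_mat Di = Di" .
  have "x \<bullet> (Di *\<^sub>v x) > 0" if x: "x \<in> carrier_vec k" "x \<noteq> 0\<^sub>v k" for x
  proof -
    define y where "y = Di *\<^sub>v x"
    have y: "y \<in> carrier_vec k" unfolding y_def using Dic x by simp
    have Dy: "D *\<^sub>v y = x" unfolding y_def
      using assoc_mult_mat_vec[OF Dc Dic x(1), symmetric] DDi x by simp
    have "y \<noteq> 0\<^sub>v k" using Dy x Dc by auto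
    then have "y \<bullet> (D *\<^sub>v y) > 0"
      using D y by (auto simp: sym_posdef_def scalar_prod_def mult_mat_vec_def atLeast0LessThan
          sum_distrib_left mult.assoc intro!: sum.cong elim!: ballE[of _ _ y])
    then show ?thesis using Dy comm_scalar_prod[OF y x(1)] by (simp add: y_def)
  qed
  then show ?thesis
    using Dic DiT unfolding sym_posdef_def
    by (auto simp: scalar_prod_def mult_mat_vec_def atLeast0LessThan sum_distrib_left mult.assoc
        intro!: sum.cong elim!: allE)
qed

lemma det_schur_compl:
  fixes A :: "real mat"
  assumes A: "A \<in> carrier_mat (Suc k) (Suc k)" and a: "A$$(k,k) \<noteq> 0"
  shows "det A = A$$(k,k) * det (schur_compl k A)"
proof -
  define a where "a = A$$(k,k)"
  txt \<open>Subtracting multiples of row \<open>k\<close> clears column \<open>k\<close> off the pivot; \<open>L\<close> is unitriangular.\<close>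
  define L where "L = mat (Suc k) (Suc k)
    (\<lambda>(i,j). if i = j then 1 else if j = k then - A$$(i,k) / a else (0::real))"
  have L: "L \<in> carrier_mat (Suc k) (Suc k)" unfolding L_def by simp
  have "upper_triangular L" unfolding L_def upper_triangular_def by auto
  then have "det L = prod_list (diag_mat L)" using det_upper_triangular L by blast
  also have "diag_mat L = map (\<lambda>_. 1) [0..<Suc k]" unfolding diag_mat_def L_def by auto
  also have "prod_list (map (\<lambda>_. 1::real) [0..<Suc k]) = 1" by (induct k) auto
  finally have det_L: "det L = 1" .
  define B where "B = L * A"
  have B: "B \<in> carrier_mat (Suc k) (Suc k)" unfolding B_def using L A by auto
  have B_entry: "B$$(i,j) = (if i = k then A$$(i,j) else A$$(i,j) - A$$(i,k) * A$$(k,j) / a)"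
    if "i < Suc k" "j < Suc k" for i j
  proof -
    have "B$$(i,j) = (\<Sum>l<Suc k. L$$(i,l) * A$$(l,j))"
      unfolding B_def using that L A
      by (auto simp: scalar_prod_def atLeast0LessThan intro!: sum.cong)
    also have "\<dots> = (\<Sum>l<Suc k. (if l = i then A$$(l,j) else 0) +
        (if l = k \<and> i \<noteq> k then - A$$(i,k) / a * A$$(l,j) else 0))"
      using that unfolding L_def by (intro sum.cong) auto
    finally show ?thesis using that by (simp add: sum.distrib)
  qed
  have "det B = det L * det A" unfolding B_def using det_mult L A by blast
  then have det_B: "det B = det A" using det_L by simp
  have "det B = (\<Sum>i<Suc k. B$$(i,k) * cofactor B i k)"
    using laplace_expansion_column[OF B] by simp
  also have "\<dots> = (\<Sum>i<Suc k. if i = k then a * cofactor B k k else 0)"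
    by (intro sum.cong) (auto simp: B_entry a_def a)
  also have "\<dots> = a * cofactor B k k" by simp
  also have "cofactor B k k = det (mat_delete B k k)" unfolding cofactor_def by simp
  also have "mat_delete B k k = schur_compl k A"
    unfolding mat_delete_def schur_compl_def using B
    by (intro eq_matI) (auto simp: B_entry a_def)
  finally show ?thesis using det_B a_def by simp
qed

lemma quad_form_schur_compl:
  fixes A :: "real mat"
  assumes sym: "\<And>i j. i < Suc k \<Longrightarrow> j < Suc k \<Longrightarrow> A$$(i,j) = A$$(j,i)" and a: "A$$(k,k) \<noteq> 0"
  shows "quad_form (Suc k) A (x(k := t)) =
    quad_form k (schur_compl k A) x + A$$(k,k) * (t + (\<Sum>j<k. A$$(k,j) * x j) / A$$(k,k))\<^sup>2"
proof -
  define a where "a = A$$(k,k)"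
  define p where "p = (\<Sum>j<k. A$$(k,j) * x j)"
  define S where "S = (\<Sum>i<k. \<Sum>j<k. x i * A$$(i,j) * x j)"
  have p_col: "(\<Sum>i<k. x i * A$$(i,k)) = p" unfolding p_def
    by (intro sum.cong) (auto simp: sym)
  have "quad_form (Suc k) A (x(k := t)) =
      (\<Sum>i<Suc k. (\<Sum>j<k. (x(k := t)) i * A$$(i,j) * x j) + (x(k := t)) i * A$$(i,k) * t)"
    unfolding quad_form_def by (intro sum.cong) auto
  also have "\<dots> = S + (\<Sum>i<k. x i * A$$(i,k) * t) + (\<Sum>j<k. t * A$$(k,j) * x j) + t * a * t"
    unfolding S_def a_def by (simp add: sum.distrib)
  also have "(\<Sum>i<k. x i * A$$(i,k) * t) = p * t"
    unfolding p_col[symmetric] by (simp add: sum_distrib_right)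
  also have "(\<Sum>j<k. t * A$$(k,j) * x j) = t * p"
    unfolding p_def by (simp add: sum_distrib_left mult.assoc)
  finally have lhs: "quad_form (Suc k) A (x(k := t)) = S + 2 * t * p + a * t\<^sup>2"
    by (simp add: power2_eq_square algebra_simps fun_upd_def)
  have "quad_form k (schur_compl k A) x =
      (\<Sum>i<k. \<Sum>j<k. x i * A$$(i,j) * x j - (x i * A$$(i,k)) * (A$$(k,j) * x j) / a)"
    unfolding quad_form_def schur_compl_def a_def by (intro sum.cong) (auto simp: algebra_simps)
  also have "\<dots> = S - (\<Sum>i<k. \<Sum>j<k. (x i * A$$(i,k)) * (A$$(k,j) * x j)) / a"
    unfolding S_def by (simp add: sum_subtractf sum_divide_distrib)
  also have "(\<Sum>i<k. \<Sum>j<k. (x i * A$$(i,k)) * (A$$(k,j) * x j)) = (\<Sum>i<k. x i * A$$(i,k)) * p"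
    unfolding p_def by (simp add: sum_product)
  finally have rhs: "quad_form k (schur_compl k A) x = S - p * p / a" unfolding p_col .
  show ?thesis
    unfolding lhs rhs p_def[symmetric] a_def[symmetric] using a unfolding a_def[symmetric]
    by (simp add: power2_eq_square field_simps)
qed

lemma sym_posdef_schur_compl:
  assumes A: "sym_posdef (Suc k) A"
  shows "sym_posdef k (schur_compl k A)"
  unfolding sym_posdef_iff
proof (intro conjI allI impI)
  have a: "A$$(k,k) > 0" using sym_posdef_diag_pos[OF A] by simp
  have sym: "\<And>i j. i < Suc k \<Longrightarrow> j < Suc k \<Longrightarrow> A$$(i,j) = A$$(j,i)"
    using A unfolding sym_posdef_iff by blast
  show "schur_compl k A \<in> carrier_mat k k" unfolding schur_compl_def by simp
  show "schur_compl k A $$ (i,j) = schur_compl k A $$ (j,i)" if "i < k" "j < k" for i j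
    using that sym[of i j] sym[of i k] sym[of k j] unfolding schur_compl_def by simp
  fix x :: "nat \<Rightarrow> real" assume x: "\<exists>i<k. x i \<noteq> 0"
  define t where "t = - (\<Sum>j<k. A$$(k,j) * x j) / A$$(k,k)"
  have "\<exists>i<Suc k. (x(k := t)) i \<noteq> 0" using x by auto
  then have "quad_form (Suc k) A (x(k := t)) > 0"
    using A unfolding sym_posdef_iff by blast
  also have "quad_form (Suc k) A (x(k := t)) = quad_form k (schur_compl k A) x"
    using quad_form_schur_compl[OF sym, of k x t] a unfolding t_def by simp
  finally show "quad_form k (schur_compl k A) x > 0" .
qed

lemma det_0_mat: "A \<in> carrier_mat 0 0 \<Longrightarrow> det A = (1::real)"
  using det_upper_triangular[of A 0] by (simp add: upper_triangular_def diag_mat_def)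

lemma sym_posdef_det_pos: "sym_posdef k A \<Longrightarrow> det A > 0"
proof (induction k arbitrary: A)
  case 0
  then show ?case using det_0_mat by (auto simp: sym_posdef_def)
next
  case (Suc k)
  have "det A = A$$(k,k) * det (schur_compl k A)"
    using Suc.prems sym_posdef_diag_pos[OF Suc.prems, of k]
    by (intro det_schur_compl) (auto simp: sym_posdef_def)
  then show ?case
    using Suc.IH[OF sym_posdef_schur_compl[OF Suc.prems]] sym_posdef_diag_pos[OF Suc.prems, of k] by simp
qed

lemma quad_form_shift:
  fixes A :: "real mat"
  assumes sym: "\<And>i j. i < k \<Longrightarrow> j < k \<Longrightarrow> A$$(i,j) = A$$(j,i)"
    and w: "\<And>i. i < k \<Longrightarrow> (\<Sum>j<k. A$$(i,j) * c j) = w i"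
  shows "quad_form k A (\<lambda>i. x i - c i) = quad_form k A x - 2 * (\<Sum>i<k. x i * w i) + (\<Sum>i<k. c i * w i)"
proof -
  have "quad_form k A (\<lambda>i. x i - c i) = (\<Sum>i<k. \<Sum>j<k. x i * A$$(i,j) * x j - x i * (A$$(i,j) * c j)
        - x j * (A$$(j,i) * c i) + c i * (A$$(i,j) * c j))"
    unfolding quad_form_def by (intro sum.cong) (auto simp: sym algebra_simps)
  also have "\<dots> = quad_form k A x - (\<Sum>i<k. \<Sum>j<k. x i * (A$$(i,j) * c j))
        - (\<Sum>i<k. \<Sum>j<k. x j * (A$$(j,i) * c i)) + (\<Sum>i<k. \<Sum>j<k. c i * (A$$(i,j) * c j))"
    unfolding quad_form_def by (simp add: sum_subtractf sum.distrib)
  also have "(\<Sum>i<k. \<Sum>j<k. x j * (A$$(j,i) * c i)) = (\<Sum>i<k. \<Sum>j<k. x i * (A$$(i,j) * c j))"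
    by (rule sum.swap)
  also have "(\<Sum>i<k. \<Sum>j<k. x i * (A$$(i,j) * c j)) = (\<Sum>i<k. x i * w i)"
    by (intro sum.cong) (auto simp: w[symmetric] sum_distrib_left)
  also have "(\<Sum>i<k. \<Sum>j<k. c i * (A$$(i,j) * c j)) = (\<Sum>i<k. c i * w i)"
    by (intro sum.cong) (auto simp: w[symmetric] sum_distrib_left)
  finally show ?thesis by simp
qed

section \<open>Gaussian integrals\<close>

lemma measurable_quad_form_shift [measurable]:
  assumes "{..<k} \<subseteq> I"
  shows "(\<lambda>x. quad_form k A (\<lambda>i. x i - c i)) \<in> borel_measurable (PiM I (\<lambda>_. lborel))"
  using assms unfolding quad_form_def
  by (auto intro!: borel_measurable_sum borel_measurable_times borel_measurable_diff
      measurable_component_singleton)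

lemma measurable_linear_form [measurable]:
  "(\<lambda>x. \<Sum>i<k. v i * x i :: real) \<in> borel_measurable (PiM {..<k} (\<lambda>_. lborel))"
  by (auto intro!: borel_measurable_sum borel_measurable_times measurable_component_singleton)

lemma product_sigma_finite_lborel: "product_sigma_finite (\<lambda>_. lborel :: real measure)"
  by (simp add: product_sigma_finite_def lborel.sigma_finite_measure_axioms)

lemma nn_integral_gaussian_kernel:
  fixes a s :: real
  assumes a: "a > 0"
  shows "(\<integral>\<^sup>+t. ennreal (exp (- (a * (t + s)\<^sup>2) / 2)) \<partial>lborel) = ennreal (sqrt (2 * pi / a))"
proof -
  define \<sigma> where "\<sigma> = 1 / sqrt a"
  have \<sigma>: "\<sigma> > 0" using a by (simp add: \<sigma>_def)
  have density: "ennreal (normal_density (-s) \<sigma> t) =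
      ennreal (sqrt (a / (2 * pi))) * ennreal (exp (- (a * (t + s)\<^sup>2) / 2))" for t
    unfolding normal_density_def \<sigma>_def using a
    by (simp add: power_divide real_sqrt_divide field_simps flip: ennreal_mult)
  have "1 = (\<integral>\<^sup>+t. ennreal (normal_density (-s) \<sigma> t) \<partial>lborel)"
    using prob_space.emeasure_space_1[OF prob_space_normal_density[OF \<sigma>, of "-s"]]
    by (simp add: emeasure_density)
  also have "\<dots> = ennreal (sqrt (a / (2 * pi))) * (\<integral>\<^sup>+t. ennreal (exp (- (a * (t + s)\<^sup>2) / 2)) \<partial>lborel)"
    unfolding density by (rule nn_integral_cmult) simp
  finally have "ennreal (sqrt (2 * pi / a)) = ennreal (sqrt (2 * pi / a)) * ennreal (sqrt (a / (2 * pi))) *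
      (\<integral>\<^sup>+t. ennreal (exp (- (a * (t + s)\<^sup>2) / 2)) \<partial>lborel)"
    by (simp add: mult.assoc)
  also have "ennreal (sqrt (2 * pi / a)) * ennreal (sqrt (a / (2 * pi))) = 1"
    using a by (simp flip: ennreal_mult real_sqrt_mult)
  finally show ?thesis by simp
qed

lemma nn_integral_gaussian_last_coord:
  assumes A: "sym_posdef (Suc k) A"
  shows "(\<integral>\<^sup>+t. ennreal (exp (- quad_form (Suc k) A (\<lambda>i. (x(k := t)) i - c i) / 2)) \<partial>lborel) =
    ennreal (exp (- quad_form k (schur_compl k A) (\<lambda>i. x i - c i) / 2)) * ennreal (sqrt (2 * pi / A$$(k,k)))"
proof -
  define a where "a = A$$(k,k)"
  have a: "a > 0" unfolding a_def using sym_posdef_diag_pos[OF A] by simp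
  have sym: "\<And>i j. i < Suc k \<Longrightarrow> j < Suc k \<Longrightarrow> A$$(i,j) = A$$(j,i)"
    using A unfolding sym_posdef_iff by blast
  define y where "y = (\<lambda>i. x i - c i)"
  define s where "s = - c k + (\<Sum>j<k. A$$(k,j) * y j) / a"
  have "quad_form (Suc k) A (\<lambda>i. (x(k := t)) i - c i) = quad_form (Suc k) A (y(k := t - c k))" for t
    unfolding y_def by (rule arg_cong[where f="quad_form _ _"]) auto
  also have "quad_form (Suc k) A (y(k := t - c k)) = quad_form k (schur_compl k A) y + a * (t + s)\<^sup>2" for t
    using a by (subst quad_form_schur_compl[OF sym]) (simp_all add: s_def a_def algebra_simps)
  finally have "(\<integral>\<^sup>+t. ennreal (exp (- quad_form (Suc k) A (\<lambda>i. (x(k := t)) i - c i) / 2)) \<partial>lborel) =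
      (\<integral>\<^sup>+t. ennreal (exp (- quad_form k (schur_compl k A) y / 2)) * ennreal (exp (- (a * (t + s)\<^sup>2) / 2)) \<partial>lborel)"
    by (intro nn_integral_cong) (simp add: field_simps flip: ennreal_mult exp_add)
  also have "\<dots> = ennreal (exp (- quad_form k (schur_compl k A) y / 2)) *
      (\<integral>\<^sup>+t. ennreal (exp (- (a * (t + s)\<^sup>2) / 2)) \<partial>lborel)"
    by (rule nn_integral_cmult) simp
  also have "\<dots> = ennreal (exp (- quad_form k (schur_compl k A) y / 2)) * ennreal (sqrt (2 * pi / a))"
    using nn_integral_gaussian_kernel[OF a, of s] by simp
  finally show ?thesis unfolding y_def a_def .
qed

lemma nn_integral_gaussian:
  assumes "sym_posdef k A"
  shows "(\<integral>\<^sup>+x. ennreal (exp (- quad_form k A (\<lambda>i. x i - c i) / 2)) \<partial>PiM {..<k} (\<lambda>_. lborel)) =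
    ennreal (sqrt ((2 * pi) ^ k / det A))"
  using assms
proof (induction k arbitrary: A)
  case 0
  then have "det A = 1" using det_0_mat by (auto simp: sym_posdef_def)
  then show ?case by (simp add: PiM_empty quad_form_def)
next
  case (Suc k)
  define a where "a = A$$(k,k)"
  define A' where "A' = schur_compl k A"
  have a: "a > 0" unfolding a_def using sym_posdef_diag_pos[OF Suc.prems] by simp
  have A': "sym_posdef k A'" unfolding A'_def by (rule sym_posdef_schur_compl[OF Suc.prems])
  have det_A: "det A = a * det A'"
    unfolding a_def A'_def using Suc.prems a[unfolded a_def]
    by (intro det_schur_compl) (auto simp: sym_posdef_def)
  have "(\<integral>\<^sup>+x. ennreal (exp (- quad_form (Suc k) A (\<lambda>i. x i - c i) / 2)) \<partial>PiM {..<Suc k} (\<lambda>_. lborel)) =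
      (\<integral>\<^sup>+x. \<integral>\<^sup>+t. ennreal (exp (- quad_form (Suc k) A (\<lambda>i. (x(k := t)) i - c i) / 2)) \<partial>lborel
        \<partial>PiM {..<k} (\<lambda>_. lborel))"
    unfolding lessThan_Suc
  proof (rule product_sigma_finite.product_nn_integral_insert[OF product_sigma_finite_lborel])
    have [measurable]: "(\<lambda>x. quad_form (Suc k) A (\<lambda>i. x i - c i)) \<in> borel_measurable (PiM (insert k {..<k}) (\<lambda>_. lborel))"
      by (rule measurable_quad_form_shift) auto
    show "(\<lambda>x. ennreal (exp (- quad_form (Suc k) A (\<lambda>i. x i - c i) / 2))) \<in> borel_measurable (PiM (insert k {..<k}) (\<lambda>_. lborel))"
      by measurable
  qed auto
  also have "\<dots> = (\<integral>\<^sup>+x. ennreal (exp (- quad_form k A' (\<lambda>i. x i - c i) / 2)) * ennreal (sqrt (2 * pi / a))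
        \<partial>PiM {..<k} (\<lambda>_. lborel))"
    unfolding nn_integral_gaussian_last_coord[OF Suc.prems] A'_def a_def ..
  also have "\<dots> = ennreal (sqrt ((2 * pi) ^ k / det A')) * ennreal (sqrt (2 * pi / a))"
    unfolding Suc.IH[OF A', symmetric] by (rule nn_integral_multc) measurable
  also have "\<dots> = ennreal (sqrt ((2 * pi) ^ Suc k / det A))"
    using a sym_posdef_det_pos[OF A']
    by (simp add: det_A real_sqrt_mult[symmetric] field_simps flip: ennreal_mult)
  finally show ?case .
qed

lemma nn_integral_std_normal_exp_linear:
  "(\<integral>\<^sup>+g. ennreal (exp (- g\<^sup>2 / 2) / sqrt (2 * pi) * exp (s * g)) \<partial>lborel) = ennreal (exp (s\<^sup>2 / 2))"
proof -
  have "exp (- g\<^sup>2 / 2) * exp (s * g) = exp (s\<^sup>2 / 2) * exp (- (g - s)\<^sup>2 / 2)" for g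
    unfolding mult_exp_exp by (simp add: power2_eq_square field_simps)
  then have "ennreal (exp (- g\<^sup>2 / 2) / sqrt (2 * pi) * exp (s * g)) =
      ennreal (exp (s\<^sup>2 / 2)) * ennreal (normal_density s 1 g)" for g
    unfolding normal_density_def by (simp flip: ennreal_mult)
  then have "(\<integral>\<^sup>+g. ennreal (exp (- g\<^sup>2 / 2) / sqrt (2 * pi) * exp (s * g)) \<partial>lborel) =
      ennreal (exp (s\<^sup>2 / 2)) * (\<integral>\<^sup>+g. ennreal (normal_density s 1 g) \<partial>lborel)"
    by (simp add: nn_integral_cmult)
  also have "(\<integral>\<^sup>+g. ennreal (normal_density s 1 g) \<partial>lborel) = 1"
    using prob_space.emeasure_space_1[OF prob_space_normal_density[of 1 s]]
    by (simp add: emeasure_density)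
  finally show ?thesis by simp
qed

lemma nn_integral_std_normal_exp_square:
  assumes "2 * a < 1"
  shows "(\<integral>\<^sup>+g. ennreal (exp (- g\<^sup>2 / 2) / sqrt (2 * pi) * exp (a * g\<^sup>2)) \<partial>lborel) =
    ennreal (1 / sqrt (1 - 2 * a))"
proof -
  define b where "b = 1 - 2 * a"
  have b: "b > 0" using assms by (simp add: b_def)
  have "exp (- g\<^sup>2 / 2) * exp (a * g\<^sup>2) = exp (- (b * (g + 0)\<^sup>2) / 2)" for g
    unfolding mult_exp_exp b_def by (simp add: algebra_simps)
  then have "(\<integral>\<^sup>+g. ennreal (exp (- g\<^sup>2 / 2) / sqrt (2 * pi) * exp (a * g\<^sup>2)) \<partial>lborel) =
      (\<integral>\<^sup>+g. ennreal (1 / sqrt (2 * pi)) * ennreal (exp (- (b * (g + 0)\<^sup>2) / 2)) \<partial>lborel)"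
    by (intro nn_integral_cong) (simp flip: ennreal_mult)
  also have "\<dots> = ennreal (1 / sqrt (2 * pi)) * ennreal (sqrt (2 * pi / b))"
    using nn_integral_gaussian_kernel[OF b, of 0] by (simp add: nn_integral_cmult)
  also have "\<dots> = ennreal (1 / sqrt b)"
    using b by (simp add: real_sqrt_divide flip: ennreal_mult)
  finally show ?thesis unfolding b_def .
qed

section \<open>Chernoff bounds and elementary inequalities\<close>

lemma chernoff_bound_PiM:
  assumes M: "prob_space M" and f [measurable]: "f \<in> borel_measurable M" and l: "0 \<le> l"
  shows "emeasure (PiM {..<n} (\<lambda>_. M)) {w \<in> space (PiM {..<n} (\<lambda>_. M)). a \<le> (\<Sum>i<n. f (w i))}
     \<le> ennreal (exp (- l * a)) * (\<integral>\<^sup>+x. ennreal (exp (l * f x)) \<partial>M) ^ n"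
proof -
  interpret P: prob_space M by (rule M)
  have psf: "product_sigma_finite (\<lambda>_. M)"
    by (simp add: product_sigma_finite_def P.sigma_finite_measure_axioms)
  define S where "S = {w \<in> space (PiM {..<n} (\<lambda>_. M)). a \<le> (\<Sum>i<n. f (w i))}"
  have S: "S \<in> sets (PiM {..<n} (\<lambda>_. M))" unfolding S_def by measurable
  have markov: "indicator S w \<le> ennreal (exp (- l * a)) * (\<Prod>i<n. ennreal (exp (l * f (w i))))" for w
  proof -
    have "ennreal (exp (- l * a)) * (\<Prod>i<n. ennreal (exp (l * f (w i)))) =
        ennreal (exp (l * ((\<Sum>i<n. f (w i)) - a)))"
    proof -
      have "(\<Prod>i<n. ennreal (exp (l * f (w i)))) = ennreal (exp (l * (\<Sum>i<n. f (w i))))"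
        by (simp add: prod_ennreal exp_sum sum_distrib_left)
      then show ?thesis by (simp add: mult_exp_exp algebra_simps flip: ennreal_mult)
    qed
    moreover have "1 \<le> exp (l * ((\<Sum>i<n. f (w i)) - a))" if "w \<in> S"
      using that l unfolding S_def by auto
    ultimately show ?thesis by (cases "w \<in> S") auto
  qed
  have "emeasure (PiM {..<n} (\<lambda>_. M)) S = (\<integral>\<^sup>+w. indicator S w \<partial>PiM {..<n} (\<lambda>_. M))"
    using S by simp
  also have "\<dots> \<le> (\<integral>\<^sup>+w. ennreal (exp (- l * a)) * (\<Prod>i<n. ennreal (exp (l * f (w i)))) \<partial>PiM {..<n} (\<lambda>_. M))"
    by (intro nn_integral_mono markov)
  also have "\<dots> = ennreal (exp (- l * a)) * (\<integral>\<^sup>+w. (\<Prod>i<n. ennreal (exp (l * f (w i)))) \<partial>PiM {..<n} (\<lambda>_. M))"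
    by (rule nn_integral_cmult) measurable
  also have "(\<integral>\<^sup>+w. (\<Prod>i<n. ennreal (exp (l * f (w i)))) \<partial>PiM {..<n} (\<lambda>_. M)) =
      (\<integral>\<^sup>+x. ennreal (exp (l * f x)) \<partial>M) ^ n"
    using product_sigma_finite.product_nn_integral_prod[OF psf, of "{..<n}" "\<lambda>_ x. ennreal (exp (l * f x))"]
    by simp
  finally show ?thesis unfolding S_def .
qed

lemma inverse_sqrt_one_minus_le_exp:
  fixes x :: real
  assumes "0 \<le> x" "x \<le> 1/2"
  shows "1 / sqrt (1 - x) \<le> exp ((x + 2 * x\<^sup>2) / 2)"
proof -
  have "sqrt (1 - x) = exp (ln (1 - x) / 2)"
    using assms by (simp add: sqrt_def root_powr_inverse powr_def)
  then have "1 / sqrt (1 - x) = exp (- ln (1 - x) / 2)" by (simp add: exp_minus field_simps)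
  also have "\<dots> \<le> exp ((x + 2 * x\<^sup>2) / 2)"
    using ln_one_minus_pos_lower_bound[OF assms] by simp
  finally show ?thesis .
qed

lemma one_plus_half_le_inverse_sqrt:
  fixes x :: real
  assumes "0 \<le> x" "x < 1"
  shows "1 + x / 2 \<le> 1 / sqrt (1 - x)"
proof -
  have "(1 + x/2)\<^sup>2 * (1 - x) = 1 - 3/4 * x\<^sup>2 - x^3/4"
    by (simp add: power2_eq_square power3_eq_cube field_simps)
  also have "\<dots> \<le> 1" using assms zero_le_power[of x 3] zero_le_power2[of x] by linarith
  finally have "sqrt ((1 + x/2)\<^sup>2 * (1 - x)) \<le> 1" by simp
  then have "(1 + x/2) * sqrt (1 - x) \<le> 1" using assms by (simp add: real_sqrt_mult)
  then show ?thesis using assms by (simp add: field_simps)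
qed

lemma exp_minus_plus_exp_le:
  fixes u :: real
  assumes "0 \<le> u"
  shows "exp (- u) + exp u \<le> 2 + u\<^sup>2 * exp u"
proof -
  have "exp u * (1 - u) \<le> exp u * exp (-u)"
    using exp_ge_add_one_self[of "-u"] by (simp add: mult_left_mono)
  then have "exp u - 1 \<le> u * exp u" by (simp add: exp_minus algebra_simps)
  moreover have "0 \<le> exp u - 1" using assms by simp
  ultimately have "(exp u - 1)\<^sup>2 \<le> (u * exp u)\<^sup>2" by (simp add: power_mono)
  then have "(exp u - 1)\<^sup>2 / exp u \<le> u\<^sup>2 * exp u" by (simp add: field_simps power2_eq_square)
  moreover have "(exp u - 1)\<^sup>2 / exp u = exp (-u) + exp u - 2"
    by (simp add: power2_eq_square field_simps exp_minus)
  ultimately show ?thesis by simp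
qed

lemma square_div_4_le_exp:
  fixes z :: real
  assumes "0 \<le> z"
  shows "z\<^sup>2 / 4 \<le> exp z"
proof -
  have "z\<^sup>2 / 4 \<le> (1 + z/2)\<^sup>2" using assms by (simp add: power2_eq_square field_simps)
  also have "\<dots> \<le> (exp (z/2))\<^sup>2" using assms exp_ge_add_one_self[of "z/2"] by (intro power_mono) auto
  also have "\<dots> = exp z" by (simp add: power2_eq_square flip: exp_add)
  finally show ?thesis .
qed

text \<open>With \<open>u = \<mu> y\<^sup>2\<close>, the term \<open>u\<^sup>2 exp u\<close> of the previous bound is dominated by an exponential
  in \<open>y\<^sup>2\<close>, whose Gaussian expectation is explicit.\<close>
lemma exp_minus_plus_exp_square_le:
  fixes \<beta> \<mu> y :: real
  assumes \<beta>: "\<beta> > 0" and \<mu>: "0 \<le> \<mu>"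
  shows "exp (- \<mu> * y\<^sup>2) + exp (\<mu> * y\<^sup>2) \<le> 2 + 4 * \<mu>\<^sup>2 / \<beta>\<^sup>2 * exp ((\<beta> + \<mu>) * y\<^sup>2)"
proof -
  define u where "u = \<mu> * y\<^sup>2"
  have u: "0 \<le> u" unfolding u_def using \<mu> by simp
  have "(\<beta> * y\<^sup>2)\<^sup>2 / 4 \<le> exp (\<beta> * y\<^sup>2)" by (rule square_div_4_le_exp) (use \<beta> in simp)
  then have y4: "(y\<^sup>2)\<^sup>2 \<le> 4 / \<beta>\<^sup>2 * exp (\<beta> * y\<^sup>2)"
    using \<beta> by (simp add: power_mult_distrib field_simps)
  have "exp (- u) + exp u \<le> 2 + u\<^sup>2 * exp u" by (rule exp_minus_plus_exp_le[OF u])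
  also have "u\<^sup>2 * exp u = \<mu>\<^sup>2 * (y\<^sup>2)\<^sup>2 * exp u" unfolding u_def by (simp add: power_mult_distrib)
  also have "\<dots> \<le> \<mu>\<^sup>2 * (4 / \<beta>\<^sup>2 * exp (\<beta> * y\<^sup>2)) * exp u"
    using y4 by (intro mult_right_mono mult_left_mono) auto
  also have "\<dots> = 4 * \<mu>\<^sup>2 / \<beta>\<^sup>2 * exp ((\<beta> + \<mu>) * y\<^sup>2)"
    unfolding u_def by (simp add: algebra_simps flip: exp_add)
  finally show ?thesis unfolding u_def by simp
qed

section \<open>The multivariate normal distribution\<close>

locale gaussian_cov =
  fixes k :: nat and D Di :: "real mat"
  assumes sym_posdef_D: "sym_posdef k D" and inverse_D: "mat_inverse D = Some Di"
begin

lemma carrier_D: "D \<in> carrier_mat k k"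
  using sym_posdef_D by (simp add: sym_posdef_def)

lemma carrier_Di: "Di \<in> carrier_mat k k" and Di_mult_D: "Di * D = 1\<^sub>m k"
  using mat_inverse(2)[OF carrier_D inverse_D] by auto

lemma sym_posdef_Di: "sym_posdef k Di"
  by (rule sym_posdef_inverse[OF sym_posdef_D inverse_D])

lemma det_Di: "det Di = 1 / det D"
  using det_mult[OF carrier_Di carrier_D] Di_mult_D sym_posdef_det_pos[OF sym_posdef_D]
  by (simp add: field_simps)

definition gaussian_density :: "(nat \<Rightarrow> real) \<Rightarrow> ennreal" where
  "gaussian_density x = ennreal (exp (- quad_form k Di x / 2) / sqrt ((2 * pi) ^ k * det D))"

lemma mvnormal_eq_density: "mvnormal k D = density (PiM {..<k} (\<lambda>_. lborel)) gaussian_density"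
  unfolding mvnormal_def gaussian_density_def quad_form_def using inverse_D by simp

lemma gaussian_density_mult:
  "gaussian_density x * ennreal (exp y) =
    ennreal (exp (- quad_form k Di x / 2 + y) / sqrt ((2 * pi) ^ k * det D))"
  unfolding gaussian_density_def exp_add using sym_posdef_det_pos[OF sym_posdef_D]
  by (subst ennreal_mult[symmetric]) auto

lemma measurable_gaussian_density [measurable]:
  "gaussian_density \<in> borel_measurable (PiM {..<k} (\<lambda>_. lborel))"
  using measurable_quad_form_shift[of k "{..<k}" Di "\<lambda>_. 0"]
  unfolding gaussian_density_def by simp

lemma sets_mvnormal [measurable_cong]: "sets (mvnormal k D) = sets (PiM {..<k} (\<lambda>_. lborel))"
  unfolding mvnormal_eq_density by simp

lemma nn_integral_gaussian_density_shift:
  "(\<integral>\<^sup>+x. gaussian_density (\<lambda>i. x i - c i) \<partial>PiM {..<k} (\<lambda>_. lborel)) = 1"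
proof -
  define C where "C = sqrt ((2 * pi) ^ k * det D)"
  have C: "C > 0" unfolding C_def using sym_posdef_det_pos[OF sym_posdef_D] by simp
  have "(\<integral>\<^sup>+x. gaussian_density (\<lambda>i. x i - c i) \<partial>PiM {..<k} (\<lambda>_. lborel)) =
      (\<integral>\<^sup>+x. ennreal (exp (- quad_form k Di (\<lambda>i. x i - c i) / 2)) * ennreal (1 / C) \<partial>PiM {..<k} (\<lambda>_. lborel))"
    unfolding gaussian_density_def C_def[symmetric] using C
    by (intro nn_integral_cong) (simp flip: ennreal_mult)
  also have "\<dots> = (\<integral>\<^sup>+x. ennreal (exp (- quad_form k Di (\<lambda>i. x i - c i) / 2)) \<partial>PiM {..<k} (\<lambda>_. lborel)) *
      ennreal (1 / C)"
    by (rule nn_integral_multc) measurable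
  also have "\<dots> = ennreal (sqrt ((2 * pi) ^ k / det Di)) * ennreal (1 / C)"
    by (simp only: nn_integral_gaussian[OF sym_posdef_Di])
  also have "\<dots> = 1"
    using C sym_posdef_det_pos[OF sym_posdef_D]
    by (simp add: det_Di C_def real_sqrt_mult real_sqrt_divide flip: ennreal_mult)
  finally show ?thesis .
qed

lemma prob_space_mvnormal: "prob_space (mvnormal k D)"
proof
  show "emeasure (mvnormal k D) (space (mvnormal k D)) = 1"
    using nn_integral_gaussian_density_shift[of "\<lambda>_. 0"]
    unfolding mvnormal_eq_density by (simp add: emeasure_density)
qed

lemma Di_mult_D_apply:
  assumes "i < k"
  shows "(\<Sum>j<k. Di$$(i,j) * (\<Sum>l<k. D$$(j,l) * v l)) = v i"
proof -
  have "(\<Sum>j<k. Di$$(i,j) * (\<Sum>l<k. D$$(j,l) * v l)) = (\<Sum>j<k. \<Sum>l<k. Di$$(i,j) * D$$(j,l) * v l)"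
    by (simp add: sum_distrib_left mult.assoc)
  also have "\<dots> = (\<Sum>l<k. (\<Sum>j<k. Di$$(i,j) * D$$(j,l)) * v l)"
    by (subst sum.swap) (simp add: sum_distrib_right)
  also have "\<dots> = (\<Sum>l<k. (Di * D)$$(i,l) * v l)"
    using assms carrier_D carrier_Di by (intro sum.cong) (auto simp: scalar_prod_def atLeast0LessThan)
  also have "\<dots> = v i"
    using assms by (simp add: Di_mult_D if_distrib[where f="\<lambda>x. x * _"] cong: if_cong)
  finally show ?thesis .
qed

text \<open>The exponential tilt \<open>exp (t \<langle>v, x\<rangle>)\<close> shifts the Gaussian density to mean \<open>t D v\<close>.\<close>
lemma nn_integral_mvnormal_exp_linear:
  "(\<integral>\<^sup>+x. ennreal (exp (t * (\<Sum>i<k. v i * x i))) \<partial>mvnormal k D) = ennreal (exp (t\<^sup>2 * quad_form k D v / 2))"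
proof -
  define c where "c = (\<lambda>j. t * (\<Sum>l<k. D$$(j,l) * v l))"
  have sym: "\<And>i j. i < k \<Longrightarrow> j < k \<Longrightarrow> Di$$(i,j) = Di$$(j,i)"
    using sym_posdef_Di by (simp add: sym_posdef_iff)
  have shift: "quad_form k Di (\<lambda>i. x i - c i) =
      quad_form k Di x - 2 * (\<Sum>i<k. x i * (t * v i)) + (\<Sum>i<k. c i * (t * v i))" for x
  proof (rule quad_form_shift[OF sym])
    fix i assume "i < k"
    have "(\<Sum>j<k. Di$$(i,j) * c j) = t * (\<Sum>j<k. Di$$(i,j) * (\<Sum>l<k. D$$(j,l) * v l))"
      unfolding c_def by (simp add: sum_distrib_left algebra_simps)
    then show "(\<Sum>j<k. Di$$(i,j) * c j) = t * v i" using Di_mult_D_apply[OF \<open>i < k\<close>] by simp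
  qed
  have lin: "(\<Sum>i<k. x i * (t * v i)) = t * (\<Sum>i<k. v i * x i)" for x
    by (simp add: sum_distrib_left mult_ac)
  have const: "(\<Sum>i<k. c i * (t * v i)) = t\<^sup>2 * quad_form k D v"
    unfolding c_def quad_form_def by (simp add: sum_distrib_left sum_distrib_right power2_eq_square algebra_simps)
  have "- quad_form k Di x / 2 + t * (\<Sum>i<k. v i * x i) =
      - quad_form k Di (\<lambda>i. x i - c i) / 2 + t\<^sup>2 * quad_form k D v / 2" for x
    using shift[of x] lin[of x] const by linarith
  then have tilt: "gaussian_density x * ennreal (exp (t * (\<Sum>i<k. v i * x i))) =
      gaussian_density (\<lambda>i. x i - c i) * ennreal (exp (t\<^sup>2 * quad_form k D v / 2))" for x
    unfolding gaussian_density_mult by (simp add: mult_exp_exp)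
  have "(\<integral>\<^sup>+x. ennreal (exp (t * (\<Sum>i<k. v i * x i))) \<partial>mvnormal k D) =
      (\<integral>\<^sup>+x. gaussian_density (\<lambda>i. x i - c i) * ennreal (exp (t\<^sup>2 * quad_form k D v / 2)) \<partial>PiM {..<k} (\<lambda>_. lborel))"
    unfolding mvnormal_eq_density tilt[symmetric]
    by (rule nn_integral_density) (auto simp: gaussian_density_def)
  also have "\<dots> = (\<integral>\<^sup>+x. gaussian_density (\<lambda>i. x i - c i) \<partial>PiM {..<k} (\<lambda>_. lborel)) *
      ennreal (exp (t\<^sup>2 * quad_form k D v / 2))"
    unfolding gaussian_density_def by (rule nn_integral_multc) measurable
  also have "\<dots> = ennreal (exp (t\<^sup>2 * quad_form k D v / 2))"
    by (simp add: nn_integral_gaussian_density_shift)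
  finally show ?thesis .
qed

text \<open>Hubbard--Stratonovich: \<open>exp (l y\<^sup>2)\<close> is the moment generating function of \<open>sqrt (2 l) y g\<close>
  for a standard normal \<open>g\<close>; by Fubini this reduces to the linear case.\<close>
lemma nn_integral_mvnormal_exp_square:
  assumes l: "0 \<le> l" and lt: "2 * l * quad_form k D v < 1"
  shows "(\<integral>\<^sup>+x. ennreal (exp (l * (\<Sum>i<k. v i * x i)\<^sup>2)) \<partial>mvnormal k D) =
    ennreal (1 / sqrt (1 - 2 * l * quad_form k D v))"
proof -
  interpret P: prob_space "mvnormal k D" by (rule prob_space_mvnormal)
  define Y where "Y x = (\<Sum>i<k. v i * x i)" for x :: "nat \<Rightarrow> real"
  define a where "a = sqrt (2 * l)"
  have a2: "a\<^sup>2 = 2 * l" unfolding a_def using l by simp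
  define F where "F x g = ennreal (exp (- g\<^sup>2 / 2) / sqrt (2 * pi) * exp ((a * Y x) * g))" for x g
  have [measurable]: "Y \<in> borel_measurable (mvnormal k D)" unfolding Y_def[abs_def] by measurable
  have psf: "pair_sigma_finite (mvnormal k D) lborel"
    by (simp add: pair_sigma_finite_def P.sigma_finite_measure_axioms lborel.sigma_finite_measure_axioms)
  have "(\<integral>\<^sup>+x. ennreal (exp (l * (Y x)\<^sup>2)) \<partial>mvnormal k D) = (\<integral>\<^sup>+x. \<integral>\<^sup>+g. F x g \<partial>lborel \<partial>mvnormal k D)"
    unfolding F_def nn_integral_std_normal_exp_linear power_mult_distrib a2 by simp
  also have "\<dots> = (\<integral>\<^sup>+g. \<integral>\<^sup>+x. F x g \<partial>mvnormal k D \<partial>lborel)"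
    by (rule pair_sigma_finite.Fubini'[OF psf, symmetric]) (simp add: F_def)
  also have "\<dots> = (\<integral>\<^sup>+g. ennreal (exp (- g\<^sup>2 / 2) / sqrt (2 * pi) * exp ((l * quad_form k D v) * g\<^sup>2)) \<partial>lborel)"
  proof (intro nn_integral_cong)
    fix g
    have "(\<integral>\<^sup>+x. F x g \<partial>mvnormal k D) =
        (\<integral>\<^sup>+x. ennreal (exp (- g\<^sup>2 / 2) / sqrt (2 * pi)) * ennreal (exp ((a * g) * Y x)) \<partial>mvnormal k D)"
      unfolding F_def by (intro nn_integral_cong) (simp add: mult_ac flip: ennreal_mult)
    also have "\<dots> = ennreal (exp (- g\<^sup>2 / 2) / sqrt (2 * pi)) * ennreal (exp ((a * g)\<^sup>2 * quad_form k D v / 2))"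
      unfolding Y_def nn_integral_mvnormal_exp_linear[symmetric] by (rule nn_integral_cmult) measurable
    finally show "(\<integral>\<^sup>+x. F x g \<partial>mvnormal k D) =
        ennreal (exp (- g\<^sup>2 / 2) / sqrt (2 * pi) * exp ((l * quad_form k D v) * g\<^sup>2))"
      unfolding power_mult_distrib a2 by (simp add: mult_ac flip: ennreal_mult)
  qed
  also have "\<dots> = ennreal (1 / sqrt (1 - 2 * l * quad_form k D v))"
    using nn_integral_std_normal_exp_square[of "l * quad_form k D v"] lt by (simp add: mult.assoc)
  finally show ?thesis unfolding Y_def .
qed

lemma nn_integral_mvnormal_exp_square_le:
  assumes l: "0 \<le> l" and ls: "l * quad_form k D v \<le> 1/4"
  shows "(\<integral>\<^sup>+x. ennreal (exp (l * (\<Sum>i<k. v i * x i)\<^sup>2)) \<partial>mvnormal k D) \<le>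
    ennreal (exp (l * quad_form k D v + 4 * l\<^sup>2 * (quad_form k D v)\<^sup>2))"
proof -
  define \<sigma> where "\<sigma> = quad_form k D v"
  have \<sigma>: "0 \<le> \<sigma>" unfolding \<sigma>_def by (rule quad_form_nonneg[OF sym_posdef_D])
  have "(\<integral>\<^sup>+x. ennreal (exp (l * (\<Sum>i<k. v i * x i)\<^sup>2)) \<partial>mvnormal k D) = ennreal (1 / sqrt (1 - 2 * l * \<sigma>))"
    unfolding \<sigma>_def by (rule nn_integral_mvnormal_exp_square) (use l ls in auto)
  also have "1 / sqrt (1 - 2 * l * \<sigma>) \<le> exp ((2 * l * \<sigma> + 2 * (2 * l * \<sigma>)\<^sup>2) / 2)"
    by (rule inverse_sqrt_one_minus_le_exp) (use l \<sigma> ls \<sigma>_def in auto)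
  also have "(2 * l * \<sigma> + 2 * (2 * l * \<sigma>)\<^sup>2) / 2 = l * \<sigma> + 4 * l\<^sup>2 * \<sigma>\<^sup>2" by (simp add: power2_eq_square)
  finally show ?thesis unfolding \<sigma>_def by (simp add: ennreal_leI)
qed

text \<open>With \<open>E exp (\<mu> Y\<^sup>2) \<ge> 1 + \<mu> \<sigma>\<close>, this bounds \<open>E exp (-\<mu> Y\<^sup>2)\<close> for the lower tail.\<close>
lemma nn_integral_mvnormal_exp_neg_square_add_le:
  assumes \<beta>: "\<beta> > 0" and \<mu>: "0 \<le> \<mu>" and small: "2 * (\<beta> + \<mu>) * quad_form k D v \<le> 1/2"
  shows "(\<integral>\<^sup>+x. ennreal (exp (- \<mu> * (\<Sum>i<k. v i * x i)\<^sup>2)) \<partial>mvnormal k D) +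
      (\<integral>\<^sup>+x. ennreal (exp (\<mu> * (\<Sum>i<k. v i * x i)\<^sup>2)) \<partial>mvnormal k D) \<le> ennreal (2 + 8 * \<mu>\<^sup>2 / \<beta>\<^sup>2)"
proof -
  interpret P: prob_space "mvnormal k D" by (rule prob_space_mvnormal)
  define \<sigma> where "\<sigma> = quad_form k D v"
  have \<sigma>: "0 \<le> \<sigma>" unfolding \<sigma>_def by (rule quad_form_nonneg[OF sym_posdef_D])
  define Y where "Y x = (\<Sum>i<k. v i * x i)" for x :: "nat \<Rightarrow> real"
  have [measurable]: "Y \<in> borel_measurable (mvnormal k D)" unfolding Y_def[abs_def] by measurable
  define c where "c = 4 * \<mu>\<^sup>2 / \<beta>\<^sup>2"
  have c: "0 \<le> c" unfolding c_def by simp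
  have "(\<integral>\<^sup>+x. ennreal (exp (- \<mu> * (Y x)\<^sup>2)) \<partial>mvnormal k D) + (\<integral>\<^sup>+x. ennreal (exp (\<mu> * (Y x)\<^sup>2)) \<partial>mvnormal k D) =
      (\<integral>\<^sup>+x. ennreal (exp (- \<mu> * (Y x)\<^sup>2)) + ennreal (exp (\<mu> * (Y x)\<^sup>2)) \<partial>mvnormal k D)"
    by (rule nn_integral_add[symmetric]) measurable
  also have "\<dots> \<le> (\<integral>\<^sup>+x. ennreal 2 + ennreal c * ennreal (exp ((\<beta> + \<mu>) * (Y x)\<^sup>2)) \<partial>mvnormal k D)"
  proof (intro nn_integral_mono)
    fix x
    have "ennreal (exp (- \<mu> * (Y x)\<^sup>2) + exp (\<mu> * (Y x)\<^sup>2)) \<le> ennreal (2 + c * exp ((\<beta> + \<mu>) * (Y x)\<^sup>2))"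
      using exp_minus_plus_exp_square_le[OF \<beta> \<mu>, of "Y x"] unfolding c_def by (intro ennreal_leI) simp
    then show "ennreal (exp (- \<mu> * (Y x)\<^sup>2)) + ennreal (exp (\<mu> * (Y x)\<^sup>2)) \<le>
        ennreal 2 + ennreal c * ennreal (exp ((\<beta> + \<mu>) * (Y x)\<^sup>2))"
      using c by (simp add: ennreal_plus ennreal_mult)
  qed
  also have "\<dots> = ennreal 2 + ennreal c * ennreal (1 / sqrt (1 - 2 * (\<beta> + \<mu>) * \<sigma>))"
    unfolding Y_def \<sigma>_def
    using nn_integral_mvnormal_exp_square[of "\<beta> + \<mu>" v] \<beta> \<mu> small \<sigma> P.emeasure_space_1
    by (simp add: nn_integral_add nn_integral_cmult \<sigma>_def)
  also have "\<dots> \<le> ennreal 2 + ennreal c * ennreal 2"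
  proof (intro add_left_mono mult_left_mono ennreal_leI)
    have "1 / sqrt (1 - 2 * (\<beta> + \<mu>) * \<sigma>) \<le> 1 / sqrt (1/4)"
      using small unfolding \<sigma>_def by (intro divide_left_mono real_sqrt_le_mono) auto
    then show "1 / sqrt (1 - 2 * (\<beta> + \<mu>) * \<sigma>) \<le> 2" by (simp add: real_sqrt_divide)
  qed simp
  also have "\<dots> = ennreal (2 + 2 * c)"
    using c by (simp add: ennreal_plus ennreal_mult mult.commute)
  also have "2 * c = 8 * \<mu>\<^sup>2 / \<beta>\<^sup>2" unfolding c_def by simp
  finally show ?thesis unfolding Y_def .
qed

lemma nn_integral_mvnormal_exp_neg_square_le:
  assumes s: "0 < s" "quad_form k D v \<le> s" and \<mu>: "0 \<le> \<mu>" "\<mu> \<le> 1 / (8 * s)"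
  shows "(\<integral>\<^sup>+x. ennreal (exp (- \<mu> * (\<Sum>i<k. v i * x i)\<^sup>2)) \<partial>mvnormal k D) \<le>
    ennreal (exp (- \<mu> * quad_form k D v + 512 * \<mu>\<^sup>2 * s\<^sup>2))"
proof -
  define \<sigma> where "\<sigma> = quad_form k D v"
  have \<sigma>: "0 \<le> \<sigma>" "\<sigma> \<le> s" unfolding \<sigma>_def using s quad_form_nonneg[OF sym_posdef_D] by auto
  define \<beta> where "\<beta> = 1 / (8 * s)"
  have \<beta>: "\<beta> > 0" "8 * \<mu>\<^sup>2 / \<beta>\<^sup>2 = 512 * \<mu>\<^sup>2 * s\<^sup>2"
    unfolding \<beta>_def using s by (simp, simp add: power2_eq_square field_simps)
  have "(\<beta> + \<mu>) * \<sigma> \<le> 1 / (4 * s) * s"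
    using \<mu> \<sigma> \<beta> unfolding \<beta>_def by (intro mult_mono) auto
  then have "(\<beta> + \<mu>) * \<sigma> \<le> 1/4" using s by simp
  then have \<beta>\<mu>: "2 * (\<beta> + \<mu>) * \<sigma> \<le> 1/2" by linarith
  have "\<mu> * \<sigma> \<le> (\<beta> + \<mu>) * \<sigma>" using \<beta> \<sigma> by (intro mult_right_mono) auto
  then have \<mu>\<sigma>: "2 * \<mu> * \<sigma> < 1" using \<beta>\<mu> by linarith
  define A where "A = (\<integral>\<^sup>+x. ennreal (exp (- \<mu> * (\<Sum>i<k. v i * x i)\<^sup>2)) \<partial>mvnormal k D)"
  have sum_le: "A + ennreal (1 / sqrt (1 - 2 * \<mu> * \<sigma>)) \<le> ennreal (2 + 512 * \<mu>\<^sup>2 * s\<^sup>2)"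
    using nn_integral_mvnormal_exp_neg_square_add_le[OF \<beta>(1) \<mu>(1) \<beta>\<mu>[unfolded \<sigma>_def]]
    unfolding A_def \<sigma>_def nn_integral_mvnormal_exp_square[OF \<mu>(1) \<mu>\<sigma>[unfolded \<sigma>_def]] \<beta>(2) .
  obtain a where a: "0 \<le> a" "A = ennreal a"
    using sum_le by (cases A) (auto simp: top_unique)
  have "a + (1 + \<mu> * \<sigma>) \<le> a + 1 / sqrt (1 - 2 * \<mu> * \<sigma>)"
    using one_plus_half_le_inverse_sqrt[of "2 * \<mu> * \<sigma>"] \<mu> \<sigma> \<mu>\<sigma> by simp
  also have "\<dots> \<le> 2 + 512 * \<mu>\<^sup>2 * s\<^sup>2"
  proof -
    have le: "ennreal (a + 1 / sqrt (1 - 2 * \<mu> * \<sigma>)) \<le> ennreal (2 + 512 * \<mu>\<^sup>2 * s\<^sup>2)"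
      using sum_le a \<mu>\<sigma> by (subst ennreal_plus) auto
    show ?thesis by (rule ennreal_le_iff[THEN iffD1, OF _ le]) simp
  qed
  finally have "a \<le> 1 + (- \<mu> * \<sigma> + 512 * \<mu>\<^sup>2 * s\<^sup>2)" by simp
  also have "\<dots> \<le> exp (- \<mu> * \<sigma> + 512 * \<mu>\<^sup>2 * s\<^sup>2)" by (rule exp_ge_add_one_self)
  finally show ?thesis using a unfolding A_def \<sigma>_def by (simp add: ennreal_leI)
qed

lemma emeasure_sum_squares_upper_tail:
  assumes s: "0 < s" "quad_form k D v \<le> s" and t: "0 < t" "t \<le> s"
  shows "emeasure (PiM {..<n} (\<lambda>_. mvnormal k D)) {w \<in> space (PiM {..<n} (\<lambda>_. mvnormal k D)).
      real n * (quad_form k D v + t) \<le> (\<Sum>i<n. (\<Sum>j<k. v j * w i j)\<^sup>2)} \<le>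
    ennreal (exp (- real n * t\<^sup>2 / (16 * s\<^sup>2)))"
proof -
  define \<sigma> where "\<sigma> = quad_form k D v"
  have \<sigma>: "0 \<le> \<sigma>" "\<sigma> \<le> s" unfolding \<sigma>_def using s quad_form_nonneg[OF sym_posdef_D] by auto
  define l where "l = t / (8 * s\<^sup>2)"
  have l: "0 \<le> l" unfolding l_def using t by simp
  have "l * \<sigma> \<le> l * s" using \<sigma> l by (intro mult_left_mono) auto
  also have "l * s \<le> 1/4" unfolding l_def using t s by (simp add: power2_eq_square field_simps)
  finally have l\<sigma>: "l * \<sigma> \<le> 1/4" .
  have "emeasure (PiM {..<n} (\<lambda>_. mvnormal k D)) {w \<in> space (PiM {..<n} (\<lambda>_. mvnormal k D)).
      real n * (\<sigma> + t) \<le> (\<Sum>i<n. (\<Sum>j<k. v j * w i j)\<^sup>2)} \<le>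
      ennreal (exp (- l * (real n * (\<sigma> + t)))) * (\<integral>\<^sup>+x. ennreal (exp (l * (\<Sum>j<k. v j * x j)\<^sup>2)) \<partial>mvnormal k D) ^ n"
    by (rule chernoff_bound_PiM[OF prob_space_mvnormal _ l]) measurable
  also have "\<dots> \<le> ennreal (exp (- l * (real n * (\<sigma> + t)))) * ennreal (exp (l * \<sigma> + 4 * l\<^sup>2 * \<sigma>\<^sup>2)) ^ n"
    using nn_integral_mvnormal_exp_square_le[OF l l\<sigma>[unfolded \<sigma>_def]] unfolding \<sigma>_def
    by (intro mult_left_mono power_mono) auto
  also have "\<dots> = ennreal (exp (real n * (- l * t + 4 * l\<^sup>2 * \<sigma>\<^sup>2)))"
    by (simp add: ennreal_power exp_of_nat_mult[symmetric] mult_exp_exp algebra_simps flip: ennreal_mult)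
  also have "\<dots> \<le> ennreal (exp (real n * (- l * t + 4 * l\<^sup>2 * s\<^sup>2)))"
    using \<sigma> by (intro ennreal_leI exp_mono mult_left_mono add_left_mono power_mono) auto
  also have "- l * t + 4 * l\<^sup>2 * s\<^sup>2 = - t\<^sup>2 / (16 * s\<^sup>2)"
    unfolding l_def using s by (simp add: power2_eq_square field_simps)
  finally show ?thesis unfolding \<sigma>_def by simp
qed

lemma emeasure_sum_squares_lower_tail:
  assumes s: "0 < s" "quad_form k D v \<le> s" and t: "0 < t" "t \<le> s"
  shows "emeasure (PiM {..<n} (\<lambda>_. mvnormal k D)) {w \<in> space (PiM {..<n} (\<lambda>_. mvnormal k D)).
      (\<Sum>i<n. (\<Sum>j<k. v j * w i j)\<^sup>2) \<le> real n * (quad_form k D v - t)} \<le>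
    ennreal (exp (- real n * t\<^sup>2 / (2048 * s\<^sup>2)))"
proof -
  define \<sigma> where "\<sigma> = quad_form k D v"
  define l where "l = t / (1024 * s\<^sup>2)"
  have l: "0 \<le> l" unfolding l_def using t by simp
  have "l = (t / s) / (1024 * s)" unfolding l_def using s by (simp add: power2_eq_square)
  also have "\<dots> \<le> 1 / (8 * s)" using t s by (simp add: field_simps)
  finally have l_le: "l \<le> 1 / (8 * s)" .
  have "{w \<in> space (PiM {..<n} (\<lambda>_. mvnormal k D)). (\<Sum>i<n. (\<Sum>j<k. v j * w i j)\<^sup>2) \<le> real n * (\<sigma> - t)} =
      {w \<in> space (PiM {..<n} (\<lambda>_. mvnormal k D)). - (real n * (\<sigma> - t)) \<le> (\<Sum>i<n. - (\<Sum>j<k. v j * w i j)\<^sup>2)}"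
    by (auto simp: sum_negf)
  then have "emeasure (PiM {..<n} (\<lambda>_. mvnormal k D)) {w \<in> space (PiM {..<n} (\<lambda>_. mvnormal k D)).
      (\<Sum>i<n. (\<Sum>j<k. v j * w i j)\<^sup>2) \<le> real n * (\<sigma> - t)} \<le>
      ennreal (exp (- l * (- (real n * (\<sigma> - t))))) *
        (\<integral>\<^sup>+x. ennreal (exp (l * (- (\<Sum>j<k. v j * x j)\<^sup>2))) \<partial>mvnormal k D) ^ n"
    by (simp only:) (rule chernoff_bound_PiM[OF prob_space_mvnormal _ l], measurable)
  also have "\<dots> \<le> ennreal (exp (- l * (- (real n * (\<sigma> - t))))) * ennreal (exp (- l * \<sigma> + 512 * l\<^sup>2 * s\<^sup>2)) ^ n"
    using nn_integral_mvnormal_exp_neg_square_le[OF s l l_le] unfolding \<sigma>_def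
    by (intro mult_left_mono power_mono) auto
  also have "\<dots> = ennreal (exp (real n * (- l * t + 512 * l\<^sup>2 * s\<^sup>2)))"
    by (simp add: ennreal_power exp_of_nat_mult[symmetric] mult_exp_exp algebra_simps flip: ennreal_mult)
  also have "- l * t + 512 * l\<^sup>2 * s\<^sup>2 = - t\<^sup>2 / (2048 * s\<^sup>2)"
    unfolding l_def using s by (simp add: power2_eq_square field_simps)
  finally show ?thesis unfolding \<sigma>_def by simp
qed

end

section \<open>Vector and operator norms\<close>

text \<open>\<open>vnorm\<close> on the first \<open>k\<close> coordinates of a function; every \<open>r \<noteq> \<infinity>\<close> gives the Euclidean norm,
  which agrees with \<open>vnorm\<close> only for \<open>r = 2\<close>.\<close>
definition norm_coords :: "ereal \<Rightarrow> nat \<Rightarrow> (nat \<Rightarrow> real) \<Rightarrow> real" where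
  "norm_coords r k f = (if r = \<infinity> then Max (insert 0 ((\<lambda>i. \<bar>f i\<bar>) ` {..<k})) else L2_set f {..<k})"

lemma vnorm_eq_norm_coords:
  assumes r: "r = 2 \<or> r = \<infinity>" and x: "x \<in> carrier_vec k"
  shows "vnorm r x = norm_coords r k (\<lambda>i. x $ i)"
proof (cases "r = \<infinity>")
  case True
  have "{\<bar>x $ i\<bar> | i. i < k} = (\<lambda>i. \<bar>x$i\<bar>) ` {..<k}" by auto
  then show ?thesis using True x unfolding vnorm_def norm_coords_def by simp
next
  case False
  then have r2: "r = 2" using r by simp
  have "\<bar>x $ i\<bar> powr 2 = (x $ i)\<^sup>2" for i
    using powr_realpow[of "\<bar>x $ i\<bar>" 2] by (cases "x $ i = 0") auto
  then show ?thesis using r2 x unfolding vnorm_def norm_coords_def L2_set_def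
    by (simp add: powr_half_sqrt sum_nonneg)
qed

lemma norm_coords_cong: "(\<And>i. i < k \<Longrightarrow> f i = g i) \<Longrightarrow> norm_coords r k f = norm_coords r k g"
  unfolding norm_coords_def by (auto intro!: L2_set_cong image_cong)

lemma norm_coords_nonneg: "0 \<le> norm_coords r k f"
  unfolding norm_coords_def by (auto simp: L2_set_nonneg intro: Max_ge)

lemma abs_le_norm_coords:
  assumes "i < k"
  shows "\<bar>f i\<bar> \<le> norm_coords r k f"
proof (cases "r = \<infinity>")
  case True then show ?thesis unfolding norm_coords_def using assms by (auto intro!: Max_ge)
next
  case False
  have "\<bar>f i\<bar> = sqrt ((f i)\<^sup>2)" by simp
  also have "\<dots> \<le> sqrt (\<Sum>j<k. (f j)\<^sup>2)"
    using assms by (intro real_sqrt_le_mono member_le_sum) auto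
  finally show ?thesis using False unfolding norm_coords_def L2_set_def by simp
qed

lemma norm_coords_inf_le:
  "r = \<infinity> \<Longrightarrow> 0 \<le> B \<Longrightarrow> (\<And>i. i < k \<Longrightarrow> \<bar>f i\<bar> \<le> B) \<Longrightarrow> norm_coords r k f \<le> B"
  unfolding norm_coords_def by (auto simp: Max_le_iff)

lemma norm_coords_triangle: "norm_coords r k (\<lambda>i. f i + g i) \<le> norm_coords r k f + norm_coords r k g"
proof (cases "r = \<infinity>")
  case True
  show ?thesis
  proof (rule norm_coords_inf_le[OF True])
    show "0 \<le> norm_coords r k f + norm_coords r k g" by (simp add: norm_coords_nonneg)
    fix i assume i: "i < k"
    have "\<bar>f i + g i\<bar> \<le> \<bar>f i\<bar> + \<bar>g i\<bar>" by (rule abs_triangle_ineq)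
    also have "\<dots> \<le> norm_coords r k f + norm_coords r k g" using abs_le_norm_coords[OF i] by (intro add_mono)
    finally show "\<bar>f i + g i\<bar> \<le> norm_coords r k f + norm_coords r k g" .
  qed
next
  case False
  then show ?thesis unfolding norm_coords_def by (simp add: L2_set_triangle_ineq)
qed

lemma norm_coords_scale: "norm_coords r k (\<lambda>i. c * f i) = \<bar>c\<bar> * norm_coords r k f"
proof (cases "r = \<infinity>")
  case True
  have "Max (insert 0 ((\<lambda>i. \<bar>c * f i\<bar>) ` {..<k})) = Max ((*) \<bar>c\<bar> ` insert 0 ((\<lambda>i. \<bar>f i\<bar>) ` {..<k}))"
    by (simp add: abs_mult image_image)
  also have "\<dots> = \<bar>c\<bar> * Max (insert 0 ((\<lambda>i. \<bar>f i\<bar>) ` {..<k}))"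
    by (rule mono_Max_commute[symmetric]) (auto simp: mono_def mult_left_mono)
  finally show ?thesis using True unfolding norm_coords_def by simp
next
  case False
  have "L2_set (\<lambda>i. c * f i) {..<k} = L2_set (\<lambda>i. \<bar>c\<bar> * f i) {..<k}"
    unfolding L2_set_def by (simp add: power_mult_distrib)
  also have "\<dots> = \<bar>c\<bar> * L2_set f {..<k}" by (rule L2_set_right_distrib[symmetric]) simp
  finally show ?thesis using False unfolding norm_coords_def by simp
qed

lemma norm_coords_zero: "norm_coords r k (\<lambda>i. 0) = 0"
  using norm_coords_scale[of r k 0 "\<lambda>i. 0"] by simp

text \<open>For \<open>r = 2\<close> this is Cauchy--Schwarz in each row.\<close>
lemma norm_coords_mat_le:
  assumes A: "\<And>i j. i < k \<Longrightarrow> j < k \<Longrightarrow> \<bar>A i j\<bar> \<le> \<eta>" and \<eta>: "0 \<le> \<eta>"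
  shows "norm_coords r k (\<lambda>i. \<Sum>j<k. A i j * y j) \<le> real k * \<eta> * norm_coords r k y"
proof (cases "r = \<infinity>")
  case True
  show ?thesis
  proof (rule norm_coords_inf_le[OF True])
    show "0 \<le> real k * \<eta> * norm_coords r k y" using \<eta> by (simp add: norm_coords_nonneg)
    fix i assume i: "i < k"
    have "\<bar>\<Sum>j<k. A i j * y j\<bar> \<le> (\<Sum>j<k. \<bar>A i j\<bar> * \<bar>y j\<bar>)"
      by (rule order_trans[OF sum_abs]) (simp add: abs_mult)
    also have "\<dots> \<le> (\<Sum>j<k. \<eta> * norm_coords r k y)"
      using A i \<eta> by (intro sum_mono mult_mono abs_le_norm_coords) (auto simp: norm_coords_nonneg)
    finally show "\<bar>\<Sum>j<k. A i j * y j\<bar> \<le> real k * \<eta> * norm_coords r k y" by simp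
  qed
next
  case False
  have row: "\<bar>\<Sum>j<k. A i j * y j\<bar> \<le> \<eta> * sqrt (real k) * L2_set y {..<k}" if i: "i < k" for i
  proof -
    have "\<bar>\<Sum>j<k. A i j * y j\<bar> \<le> (\<Sum>j<k. \<bar>A i j\<bar> * \<bar>y j\<bar>)"
      by (rule order_trans[OF sum_abs]) (simp add: abs_mult)
    also have "\<dots> \<le> (\<Sum>j<k. \<eta> * \<bar>y j\<bar>)"
      using A i by (intro sum_mono mult_right_mono) auto
    also have "\<dots> = \<eta> * (\<Sum>j<k. \<bar>(\<lambda>_. 1::real) j\<bar> * \<bar>y j\<bar>)" by (simp add: sum_distrib_left)
    also have "\<dots> \<le> \<eta> * (L2_set (\<lambda>_. 1::real) {..<k} * L2_set y {..<k})"
      using \<eta> by (intro mult_left_mono L2_set_mult_ineq)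
    also have "L2_set (\<lambda>_. 1::real) {..<k} = sqrt (real k)" unfolding L2_set_def by simp
    finally show ?thesis by (simp add: mult.assoc)
  qed
  have "L2_set (\<lambda>i. \<Sum>j<k. A i j * y j) {..<k} = L2_set (\<lambda>i. \<bar>\<Sum>j<k. A i j * y j\<bar>) {..<k}"
    unfolding L2_set_def by simp
  also have "\<dots> \<le> L2_set (\<lambda>i. \<eta> * sqrt (real k) * L2_set y {..<k}) {..<k}"
    by (rule L2_set_mono) (use row in auto)
  also have "\<dots> = sqrt (real k) * (\<eta> * sqrt (real k) * L2_set y {..<k})"
    using \<eta> by (simp add: L2_set_def real_sqrt_mult power_mult_distrib sum_nonneg)
  also have "\<dots> = real k * \<eta> * L2_set y {..<k}" by (simp add: algebra_simps)
  finally show ?thesis using False unfolding norm_coords_def by simp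
qed

lemma vnorm_mult_mat_vec:
  assumes r: "r = 2 \<or> r = \<infinity>" and A: "A \<in> carrier_mat k k" and y: "y \<in> carrier_vec k"
  shows "vnorm r (A *\<^sub>v y) = norm_coords r k (\<lambda>i. \<Sum>j<k. A$$(i,j) * y$j)"
  unfolding vnorm_eq_norm_coords[OF r mult_mat_vec_carrier[OF A y]]
  using A y by (intro norm_coords_cong) (auto simp: scalar_prod_def atLeast0LessThan)

lemma vnorm_zero_vec:
  assumes r: "r = 2 \<or> r = \<infinity>"
  shows "vnorm r (0\<^sub>v k) = 0"
proof -
  have "norm_coords r k (\<lambda>i. (0\<^sub>v k :: real vec) $ i) = norm_coords r k (\<lambda>i. 0)"
    by (rule norm_coords_cong) simp
  then show ?thesis using vnorm_eq_norm_coords[OF r zero_carrier_vec, of k] by (simp add: norm_coords_zero)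
qed

lemma vnorm_le_zero_imp:
  assumes r: "r = 2 \<or> r = \<infinity>" and y: "y \<in> carrier_vec k" and le: "vnorm r y \<le> 0"
  shows "y = 0\<^sub>v k"
proof -
  have "\<bar>y $ i\<bar> \<le> 0" if "i < k" for i
    using abs_le_norm_coords[OF that, of "\<lambda>i. y$i" r] le vnorm_eq_norm_coords[OF r y] by simp
  then show ?thesis using y by (auto simp: vec_eq_iff)
qed

lemma vnorm_unit_vec:
  assumes r: "r = 2 \<or> r = \<infinity>" and j: "j < k"
  shows "vnorm r (unit_vec k j) = 1"
proof -
  have "vnorm r (unit_vec k j) = norm_coords r k (\<lambda>i. if i = j then 1 else 0)"
    using vnorm_eq_norm_coords[OF r, of "unit_vec k j" k] j by (auto intro!: norm_coords_cong simp: unit_vec_def)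
  also have "\<dots> = 1"
  proof (cases "r = \<infinity>")
    case True
    have "norm_coords r k (\<lambda>i. if i = j then 1 else 0::real) \<le> 1" by (rule norm_coords_inf_le[OF True]) auto
    moreover have "1 \<le> norm_coords r k (\<lambda>i. if i = j then 1 else 0::real)"
      using abs_le_norm_coords[OF j, of "\<lambda>i. if i = j then 1 else 0::real" r] by simp
    ultimately show ?thesis by simp
  next
    case False
    have "(\<Sum>i<k. (if i = j then 1 else 0::real)\<^sup>2) = 1"
      using j by (simp add: if_distrib[where f="\<lambda>x. x\<^sup>2"] cong: if_cong)
    then show ?thesis using False unfolding norm_coords_def L2_set_def by simp
  qed
  finally show ?thesis .
qed

lemma bdd_above_opnorm_set:
  assumes r: "r = 2 \<or> r = \<infinity>" and A: "A \<in> carrier_mat k k"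
  shows "bdd_above {vnorm r (A *\<^sub>v x) | x. x \<in> carrier_vec (dim_col A) \<and> vnorm r x = 1}"
proof (rule bdd_aboveI)
  define \<eta> where "\<eta> = (\<Sum>i<k. \<Sum>j<k. \<bar>A$$(i,j)\<bar>)"
  have \<eta>: "\<bar>A$$(i,j)\<bar> \<le> \<eta>" if "i < k" "j < k" for i j
    unfolding \<eta>_def using that
    by (intro order_trans[OF member_le_sum[of j "{..<k}"] member_le_sum[of i "{..<k}"]])
      (auto intro: sum_nonneg)
  fix z assume "z \<in> {vnorm r (A *\<^sub>v x) | x. x \<in> carrier_vec (dim_col A) \<and> vnorm r x = 1}"
  then obtain x where x: "x \<in> carrier_vec k" "vnorm r x = 1" "z = vnorm r (A *\<^sub>v x)" using A by auto
  have "z \<le> real k * \<eta> * norm_coords r k (\<lambda>j. x$j)"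
    unfolding x(3) vnorm_mult_mat_vec[OF r A x(1)]
    by (rule norm_coords_mat_le[OF \<eta>]) (auto simp: \<eta>_def intro!: sum_nonneg)
  then show "z \<le> real k * \<eta>" using vnorm_eq_norm_coords[OF r x(1)] x(2) by simp
qed

lemma vnorm_mult_le_opnorm:
  assumes r: "r = 2 \<or> r = \<infinity>" and A: "A \<in> carrier_mat k k" and x: "x \<in> carrier_vec k"
  shows "vnorm r (A *\<^sub>v x) \<le> opnorm r A * vnorm r x"
proof (cases "vnorm r x = 0")
  case True
  then have "x = 0\<^sub>v k" using vnorm_le_zero_imp[OF r x] by simp
  moreover have "A *\<^sub>v 0\<^sub>v k = 0\<^sub>v k" using A by (auto simp: vec_eq_iff scalar_prod_def)
  ultimately show ?thesis using vnorm_zero_vec[OF r] by simp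
next
  case False
  define c where "c = vnorm r x"
  have c: "c > 0" using False norm_coords_nonneg vnorm_eq_norm_coords[OF r x] unfolding c_def
    by (metis less_eq_real_def)
  define x' where "x' = (1 / c) \<cdot>\<^sub>v x"
  have x': "x' \<in> carrier_vec k" unfolding x'_def using x by simp
  have "vnorm r x' = norm_coords r k (\<lambda>i. (1 / c) * x$i)"
    unfolding vnorm_eq_norm_coords[OF r x'] using x by (intro norm_coords_cong) (simp add: x'_def)
  then have x'1: "vnorm r x' = 1"
    unfolding norm_coords_scale using c vnorm_eq_norm_coords[OF r x] by (simp add: c_def)
  have "vnorm r (A *\<^sub>v x') = norm_coords r k (\<lambda>i. (1 / c) * (\<Sum>j<k. A$$(i,j) * x$j))"
    unfolding vnorm_mult_mat_vec[OF r A x'] using x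
    by (intro norm_coords_cong) (simp add: x'_def sum_distrib_left algebra_simps)
  then have "vnorm r (A *\<^sub>v x') = (1 / c) * vnorm r (A *\<^sub>v x)"
    unfolding norm_coords_scale vnorm_mult_mat_vec[OF r A x] using c by simp
  then have "(1 / c) * vnorm r (A *\<^sub>v x) \<le> opnorm r A"
    unfolding opnorm_def using x' x'1 A by (intro cSup_upper[OF _ bdd_above_opnorm_set[OF r A]]) force
  then show ?thesis unfolding c_def[symmetric] using c by (simp add: field_simps)
qed

lemma opnorm_le:
  assumes r: "r = 2 \<or> r = \<infinity>" and k: "k \<ge> 1" and A: "A \<in> carrier_mat k k"
    and B: "\<And>x. x \<in> carrier_vec k \<Longrightarrow> vnorm r x = 1 \<Longrightarrow> vnorm r (A *\<^sub>v x) \<le> B"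
  shows "opnorm r A \<le> B"
  unfolding opnorm_def
proof (rule cSup_least)
  show "{vnorm r (A *\<^sub>v x) |x. x \<in> carrier_vec (dim_col A) \<and> vnorm r x = 1} \<noteq> {}"
    using vnorm_unit_vec[OF r, of 0 k] k A unit_vec_carrier[of k 0] by fastforce
  show "z \<le> B" if "z \<in> {vnorm r (A *\<^sub>v x) |x. x \<in> carrier_vec (dim_col A) \<and> vnorm r x = 1}" for z
    using that A B by auto
qed

lemma abs_entry_le_opnorm:
  assumes r: "r = 2 \<or> r = \<infinity>" and A: "A \<in> carrier_mat k k" and ij: "i < k" "j < k"
  shows "\<bar>A$$(i,j)\<bar> \<le> opnorm r A"
proof -
  have e: "unit_vec k j \<in> carrier_vec k" by simp
  have "\<bar>A$$(i,j)\<bar> \<le> norm_coords r k (\<lambda>i. A$$(i,j))"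
    by (rule abs_le_norm_coords[OF ij(1)])
  also have "\<dots> = vnorm r (A *\<^sub>v unit_vec k j)"
    unfolding vnorm_mult_mat_vec[OF r A e]
    using ij by (intro norm_coords_cong) (simp add: unit_vec_def if_distrib[where f="\<lambda>x. _ * x"] cong: if_cong)
  also have "\<dots> \<le> opnorm r A"
    using vnorm_mult_le_opnorm[OF r A e] vnorm_unit_vec[OF r ij(2)] by simp
  finally show ?thesis .
qed

section \<open>Inverses of perturbed matrices\<close>

lemma mat_inverse_opnorm_le:
  assumes r: "r = 2 \<or> r = \<infinity>" and k: "k \<ge> 1" and S: "S \<in> carrier_mat k k" and \<gamma>: "\<gamma> > 0"
    and lower: "\<And>y. y \<in> carrier_vec k \<Longrightarrow> \<gamma> * vnorm r y \<le> K * vnorm r (S *\<^sub>v y)"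
  shows "case mat_inverse S of None \<Rightarrow> False | Some Sv \<Rightarrow> opnorm r Sv \<le> K / \<gamma>"
proof (cases "mat_inverse S")
  case None
  have "det S = 0"
    using mat_inverse(1)[OF S None, where b="()"] det_non_zero_imp_unit[OF S, where b="()"] by blast
  then obtain y where y: "y \<in> carrier_vec k" "y \<noteq> 0\<^sub>v k" "S *\<^sub>v y = 0\<^sub>v k"
    using det_0_iff_vec_prod_zero[OF S] by blast
  have "\<gamma> * vnorm r y \<le> 0" using lower[OF y(1)] y(3) vnorm_zero_vec[OF r] by simp
  then have "vnorm r y \<le> 0" using \<gamma> by (simp add: mult_le_0_iff)
  then show ?thesis using vnorm_le_zero_imp[OF r y(1)] y(2) by simp
next
  case (Some Sv)
  have Sv: "S * Sv = 1\<^sub>m k" "Sv \<in> carrier_mat k k" using mat_inverse(2)[OF S Some] by auto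
  have "opnorm r Sv \<le> K / \<gamma>"
  proof (rule opnorm_le[OF r k Sv(2)])
    fix x :: "real vec" assume x: "x \<in> carrier_vec k" "vnorm r x = 1"
    have "S *\<^sub>v (Sv *\<^sub>v x) = x" using assoc_mult_mat_vec[OF S Sv(2) x(1), symmetric] Sv x by simp
    then have "\<gamma> * vnorm r (Sv *\<^sub>v x) \<le> K" using lower[of "Sv *\<^sub>v x"] Sv x by simp
    then show "vnorm r (Sv *\<^sub>v x) \<le> K / \<gamma>" using \<gamma> by (simp add: field_simps)
  qed
  then show ?thesis using Some by simp
qed

text \<open>If \<open>S\<close> is entrywise \<open>\<eta>\<close>-close to \<open>D\<close>, then \<open>\<parallel>D y\<parallel> \<le> \<parallel>S y\<parallel> + k \<eta> \<parallel>y\<parallel>\<close>,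
  and \<open>\<parallel>y\<parallel> \<le> K \<parallel>D y\<parallel>\<close> turns this into a lower bound for \<open>S\<close>.\<close>
lemma vnorm_le_perturbed_mult:
  assumes r: "r = 2 \<or> r = \<infinity>" and K: "0 \<le> K"
    and D: "D \<in> carrier_mat k k" and Di: "Di \<in> carrier_mat k k" and DiD: "Di * D = 1\<^sub>m k"
    and Di_norm: "opnorm r Di \<le> K" and S: "S \<in> carrier_mat k k" and \<eta>: "0 \<le> \<eta>"
    and SD: "\<And>a b. a < k \<Longrightarrow> b < k \<Longrightarrow> \<bar>S$$(a,b) - D$$(a,b)\<bar> \<le> \<eta>"
    and y: "y \<in> carrier_vec k"
  shows "(1 - K * (real k * \<eta>)) * vnorm r y \<le> K * vnorm r (S *\<^sub>v y)"
proof -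
  have Dy: "D *\<^sub>v y \<in> carrier_vec k" using D y by simp
  have "vnorm r y = vnorm r (Di *\<^sub>v (D *\<^sub>v y))"
    using assoc_mult_mat_vec[OF Di D y] DiD y by simp
  also have "\<dots> \<le> opnorm r Di * vnorm r (D *\<^sub>v y)" by (rule vnorm_mult_le_opnorm[OF r Di Dy])
  also have "\<dots> \<le> K * vnorm r (D *\<^sub>v y)"
    using Di_norm vnorm_eq_norm_coords[OF r Dy] norm_coords_nonneg by (intro mult_right_mono) auto
  also have "vnorm r (D *\<^sub>v y) \<le> vnorm r (S *\<^sub>v y) + real k * \<eta> * vnorm r y"
  proof -
    have "vnorm r (D *\<^sub>v y) =
        norm_coords r k (\<lambda>i. (\<Sum>j<k. S$$(i,j) * y$j) + (\<Sum>j<k. (D$$(i,j) - S$$(i,j)) * y$j))"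
      unfolding vnorm_mult_mat_vec[OF r D y]
      by (intro norm_coords_cong) (simp add: sum.distrib[symmetric] algebra_simps)
    also have "\<dots> \<le> norm_coords r k (\<lambda>i. \<Sum>j<k. S$$(i,j) * y$j) +
        norm_coords r k (\<lambda>i. \<Sum>j<k. (D$$(i,j) - S$$(i,j)) * y$j)"
      by (rule norm_coords_triangle)
    also have "norm_coords r k (\<lambda>i. \<Sum>j<k. (D$$(i,j) - S$$(i,j)) * y$j) \<le> real k * \<eta> * norm_coords r k (\<lambda>j. y$j)"
      by (rule norm_coords_mat_le[OF _ \<eta>]) (use SD in \<open>auto simp: abs_minus_commute\<close>)
    finally show ?thesis unfolding vnorm_mult_mat_vec[OF r S y] vnorm_eq_norm_coords[OF r y] by simp
  qed
  then have "K * vnorm r (D *\<^sub>v y) \<le> K * (vnorm r (S *\<^sub>v y) + real k * \<eta> * vnorm r y)"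
    using K by (intro mult_left_mono) auto
  finally show ?thesis by (simp add: algebra_simps)
qed

lemma mat_inverse_perturbed_opnorm_less:
  assumes r: "r = 2 \<or> r = \<infinity>" and K: "K > 0" and MK: "M > K" and k: "k \<ge> 1"
    and D: "D \<in> carrier_mat k k" and Di: "Di \<in> carrier_mat k k" and DiD: "Di * D = 1\<^sub>m k"
    and Di_norm: "opnorm r Di \<le> K" and S: "S \<in> carrier_mat k k" and \<eta>: "0 \<le> \<eta>"
    and SD: "\<And>a b. a < k \<Longrightarrow> b < k \<Longrightarrow> \<bar>S$$(a,b) - D$$(a,b)\<bar> \<le> \<eta>"
    and small: "real k * \<eta> * K \<le> (M - K) / (2 * M)"
  shows "case mat_inverse S of None \<Rightarrow> False | Some Sv \<Rightarrow> opnorm r Sv < M"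
proof -
  define \<gamma> where "\<gamma> = 1 - K * (real k * \<eta>)"
  have \<gamma>: "(M + K) / (2 * M) \<le> \<gamma>"
    using small MK K unfolding \<gamma>_def by (simp add: field_simps)
  then have "\<gamma> > 0" using MK K by (smt (verit) divide_pos_pos)
  moreover have "K / \<gamma> < M"
  proof -
    have "(M + K) / 2 \<le> M * \<gamma>" using \<gamma> MK K by (simp add: field_simps)
    then show ?thesis using \<open>\<gamma> > 0\<close> MK by (simp add: field_simps)
  qed
  ultimately show ?thesis
    using mat_inverse_opnorm_le[OF r k S \<open>\<gamma> > 0\<close>, of K]
      vnorm_le_perturbed_mult[OF r _ D Di DiD Di_norm S \<eta> SD] K
    unfolding \<gamma>_def by (auto split: option.splits)
qed

section \<open>Concentration of the sample covariance\<close>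

text \<open>With \<open>\<epsilon> = \<plusminus>1\<close>, \<open>e\<^sub>a + \<epsilon> e\<^sub>b\<close> recovers matrix entries by polarization.\<close>
definition polar_vec :: "nat \<Rightarrow> nat \<Rightarrow> real \<Rightarrow> nat \<Rightarrow> real" where
  "polar_vec a b \<epsilon> j = (if j = a then 1 else 0) + \<epsilon> * (if j = b then 1 else 0)"

lemma linear_form_polar_vec:
  assumes "a < k" "b < k"
  shows "(\<Sum>j<k. polar_vec a b \<epsilon> j * x j) = x a + \<epsilon> * x b"
proof -
  have "(\<Sum>j<k. polar_vec a b \<epsilon> j * x j) = (\<Sum>j<k. (if j = a then x j else 0) + (if j = b then \<epsilon> * x j else 0))"
    by (intro sum.cong) (auto simp: polar_vec_def algebra_simps)
  then show ?thesis using assms by (simp add: sum.distrib)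
qed

lemma quad_form_polar_vec:
  assumes "a < k" "b < k"
  shows "quad_form k A (polar_vec a b \<epsilon>) = A$$(a,a) + \<epsilon> * A$$(a,b) + \<epsilon> * (A$$(b,a) + \<epsilon> * A$$(b,b))"
proof -
  have "quad_form k A (polar_vec a b \<epsilon>) = (\<Sum>i<k. polar_vec a b \<epsilon> i * (\<Sum>j<k. polar_vec a b \<epsilon> j * A$$(i,j)))"
    unfolding quad_form_def by (simp add: sum_distrib_left mult_ac)
  also have "\<dots> = (\<Sum>i<k. polar_vec a b \<epsilon> i * (A$$(i,a) + \<epsilon> * A$$(i,b)))"
    using linear_form_polar_vec[OF assms] by simp
  also have "\<dots> = (A$$(a,a) + \<epsilon> * A$$(a,b)) + \<epsilon> * (A$$(b,a) + \<epsilon> * A$$(b,b))"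
    by (rule linear_form_polar_vec[OF assms])
  finally show ?thesis by simp
qed

lemma quad_form_polar_vec_le:
  assumes "a < k" "b < k" "\<epsilon> \<in> {1, -1}" and A: "\<And>i j. i < k \<Longrightarrow> j < k \<Longrightarrow> \<bar>A$$(i,j)\<bar> \<le> K"
  shows "quad_form k A (polar_vec a b \<epsilon>) \<le> 4 * K"
  using assms(3) A[of a a] A[of a b] A[of b a] A[of b b] assms(1,2)
  unfolding quad_form_polar_vec[OF assms(1,2)] by (auto simp: abs_le_iff)

text \<open>Polarization: \<open>(x + y)\<^sup>2 - (x - y)\<^sup>2 = 4 x y\<close>.\<close>
lemma abs_sample_cov_minus_le:
  assumes ab: "a < k" "b < k" and D: "D$$(a,b) = D$$(b,a)" and n: "n > 0"
    and dev: "\<And>\<epsilon>. \<epsilon> \<in> {1, -1} \<Longrightarrow>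
      \<bar>(\<Sum>i<n. (\<Sum>j<k. polar_vec a b \<epsilon> j * w i j)\<^sup>2) - real n * quad_form k D (polar_vec a b \<epsilon>)\<bar> < real n * t"
  shows "\<bar>sample_cov n k w $$ (a,b) - D$$(a,b)\<bar> \<le> t / 2"
proof -
  define X where "X = (\<Sum>i<n. w i a * w i b)"
  define T where "T \<epsilon> = (\<Sum>i<n. (w i a + \<epsilon> * w i b)\<^sup>2)" for \<epsilon>
  have "T 1 - T (-1) = (\<Sum>i<n. 4 * (w i a * w i b))"
    unfolding T_def sum_subtractf[symmetric] by (intro sum.cong) (auto simp: power2_eq_square algebra_simps)
  then have T: "T 1 - T (-1) = 4 * X" unfolding X_def by (simp add: sum_distrib_left)
  have "\<bar>T 1 - real n * (D$$(a,a) + D$$(a,b) + (D$$(b,a) + D$$(b,b)))\<bar> < real n * t"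
    "\<bar>T (-1) - real n * (D$$(a,a) - D$$(a,b) + (D$$(b,b) - D$$(b,a)))\<bar> < real n * t"
    using dev[of 1] dev[of "-1"] unfolding T_def linear_form_polar_vec[OF ab] quad_form_polar_vec[OF ab]
    by simp_all
  then have "\<bar>4 * X - real n * (4 * D$$(a,b))\<bar> < 2 * (real n * t)"
    unfolding T[symmetric] D by (simp add: algebra_simps abs_less_iff)
  then have "\<bar>X - real n * D$$(a,b)\<bar> < real n * t / 2" unfolding abs_less_iff by linarith
  moreover have "X / real n - D$$(a,b) = (X - real n * D$$(a,b)) / real n" using n by (simp add: field_simps)
  ultimately have "\<bar>X / real n - D$$(a,b)\<bar> < t / 2" using n by (simp add: field_simps)
  then show ?thesis using ab unfolding sample_cov_def X_def by simp
qed

context gaussian_cov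
begin

lemma emeasure_sum_squares_deviation:
  assumes s: "0 < s" "quad_form k D v \<le> s" and t: "0 < t" "t \<le> s"
  shows "emeasure (iid_mvnormal n k D) {w \<in> space (iid_mvnormal n k D).
      real n * t \<le> \<bar>(\<Sum>i<n. (\<Sum>j<k. v j * w i j)\<^sup>2) - real n * quad_form k D v\<bar>} \<le>
    ennreal (2 * exp (- real n * t\<^sup>2 / (2048 * s\<^sup>2)))"
proof -
  let ?P = "PiM {..<n} (\<lambda>_. mvnormal k D)"
  let ?T = "\<lambda>w. \<Sum>i<n. (\<Sum>j<k. v j * w i j)\<^sup>2"
  define B where "B = exp (- real n * t\<^sup>2 / (2048 * s\<^sup>2))"
  have "exp (- real n * t\<^sup>2 / (16 * s\<^sup>2)) \<le> B"
    unfolding B_def using s t by (intro exp_mono) (simp add: field_simps)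
  then have upper: "emeasure ?P {w \<in> space ?P. real n * (quad_form k D v + t) \<le> ?T w} \<le> ennreal B"
    using emeasure_sum_squares_upper_tail[OF s t, of n] by (simp add: order_trans[OF _ ennreal_leI])
  have lower: "emeasure ?P {w \<in> space ?P. ?T w \<le> real n * (quad_form k D v - t)} \<le> ennreal B"
    using emeasure_sum_squares_lower_tail[OF s t, of n] by (simp add: B_def)
  have "{w \<in> space ?P. real n * t \<le> \<bar>?T w - real n * quad_form k D v\<bar>} \<subseteq>
      {w \<in> space ?P. real n * (quad_form k D v + t) \<le> ?T w} \<union> {w \<in> space ?P. ?T w \<le> real n * (quad_form k D v - t)}"
    by (auto simp: abs_le_iff algebra_simps)
  then have "emeasure ?P {w \<in> space ?P. real n * t \<le> \<bar>?T w - real n * quad_form k D v\<bar>} \<le>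
      emeasure ?P {w \<in> space ?P. real n * (quad_form k D v + t) \<le> ?T w} +
      emeasure ?P {w \<in> space ?P. ?T w \<le> real n * (quad_form k D v - t)}"
    by (intro order_trans[OF emeasure_mono emeasure_subadditive]) measurable
  also have "\<dots> \<le> ennreal (2 * B)"
    using add_mono[OF upper lower] B_def by (simp flip: ennreal_plus)
  finally show ?thesis unfolding iid_mvnormal_def B_def .
qed

definition polar_deviation_event :: "nat \<Rightarrow> real \<Rightarrow> nat \<times> nat \<times> real \<Rightarrow> (nat \<Rightarrow> nat \<Rightarrow> real) set" where
  "polar_deviation_event n t = (\<lambda>(a, b, \<epsilon>). {w \<in> space (iid_mvnormal n k D). real n * t \<le>
    \<bar>(\<Sum>i<n. (\<Sum>j<k. polar_vec a b \<epsilon> j * w i j)\<^sup>2) - real n * quad_form k D (polar_vec a b \<epsilon>)\<bar>})"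

lemma sets_polar_deviation_event: "polar_deviation_event n t x \<in> sets (iid_mvnormal n k D)"
  unfolding polar_deviation_event_def iid_mvnormal_def by (auto split: prod.splits)

lemma emeasure_polar_deviation_event_le:
  assumes r: "r = 2 \<or> r = \<infinity>" and D_norm: "opnorm r D \<le> K"
    and x: "x \<in> {..<k} \<times> {..<k} \<times> {1, -1}" and t: "0 < t" "t \<le> 4 * K"
  shows "emeasure (iid_mvnormal n k D) (polar_deviation_event n t x) \<le>
    ennreal (2 * exp (- real n * t\<^sup>2 / (2048 * (4 * K)\<^sup>2)))"
proof -
  obtain a b \<epsilon> where x: "x = (a, b, \<epsilon>)" and ab: "a < k" "b < k" "\<epsilon> \<in> {1, -1}"
    using x by auto
  have "quad_form k D (polar_vec a b \<epsilon>) \<le> 4 * K"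
    using abs_entry_le_opnorm[OF r carrier_D] D_norm
    by (intro quad_form_polar_vec_le[OF ab]) (meson order_trans)
  then show ?thesis
    unfolding x polar_deviation_event_def using emeasure_sum_squares_deviation[of "4 * K" _ t n] t by simp
qed

lemma bad_event_subset_polar_deviation_events:
  assumes r: "r = 2 \<or> r = \<infinity>" and K: "K > 0" and MK: "M > K" and k: "k \<ge> 1" and n: "n \<ge> 1"
    and Di_norm: "opnorm r Di \<le> K" and \<delta>: "\<delta> > 0" "\<delta> * K \<le> (M - K) / (2 * M)"
  shows "bad_event r M n k \<inter> space (iid_mvnormal n k D) \<subseteq>
    (\<Union>x \<in> {..<k} \<times> {..<k} \<times> {1, -1}. polar_deviation_event n (2 * \<delta> / real k) x)"
proof (rule subsetI, rule ccontr)
  fix w assume bad: "w \<in> bad_event r M n k \<inter> space (iid_mvnormal n k D)"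
    and good: "w \<notin> (\<Union>x \<in> {..<k} \<times> {..<k} \<times> {1, -1}. polar_deviation_event n (2 * \<delta> / real k) x)"
  have dev: "\<bar>(\<Sum>i<n. (\<Sum>j<k. polar_vec a b \<epsilon> j * w i j)\<^sup>2) - real n * quad_form k D (polar_vec a b \<epsilon>)\<bar>
      < real n * (2 * \<delta> / real k)" if "a < k" "b < k" "\<epsilon> \<in> {1, -1}" for a b \<epsilon>
  proof -
    have "(a, b, \<epsilon>) \<in> {..<k} \<times> {..<k} \<times> {1, -1}" using that by simp
    then have "w \<notin> polar_deviation_event n (2 * \<delta> / real k) (a, b, \<epsilon>)" using good by blast
    then show ?thesis using bad unfolding polar_deviation_event_def by (simp add: not_le)
  qed
  have D_sym: "\<And>a b. a < k \<Longrightarrow> b < k \<Longrightarrow> D$$(a,b) = D$$(b,a)"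
    using sym_posdef_D by (simp add: sym_posdef_iff)
  have close: "\<bar>sample_cov n k w $$ (a,b) - D$$(a,b)\<bar> \<le> \<delta> / real k" if "a < k" "b < k" for a b
    using abs_sample_cov_minus_le[OF that D_sym[OF that], of n w "2 * \<delta> / real k"] dev[OF that] n
    by simp
  have "real k * (\<delta> / real k) * K \<le> (M - K) / (2 * M)" using \<delta>(2) k by simp
  moreover have "sample_cov n k w \<in> carrier_mat k k" "0 \<le> \<delta> / real k"
    using \<delta>(1) by (simp_all add: sample_cov_def)
  ultimately have "case mat_inverse (sample_cov n k w) of None \<Rightarrow> False | Some Sv \<Rightarrow> opnorm r Sv < M"
    using mat_inverse_perturbed_opnorm_less[OF r K MK k carrier_D carrier_Di Di_mult_D Di_norm _ _ close]
    by blast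
  then show False using bad unfolding bad_event_def by (auto split: option.splits)
qed

lemma measure_bad_event_le:
  assumes r: "r = 2 \<or> r = \<infinity>" and K: "K > 0" and MK: "M > K" and k: "k \<ge> 1" and n: "n \<ge> 1"
    and Di_norm: "opnorm r Di \<le> K" and D_norm: "opnorm r D \<le> K"
    and \<delta>: "\<delta> > 0" "\<delta> \<le> 2 * K" "\<delta> * K \<le> (M - K) / (2 * M)"
  shows "measure (iid_mvnormal n k D) (bad_event r M n k \<inter> space (iid_mvnormal n k D)) \<le>
    4 * real k ^ 2 * exp (- (\<delta>\<^sup>2 / (8192 * K\<^sup>2)) * real n / real k ^ 2)"
proof -
  let ?P = "iid_mvnormal n k D"
  interpret P: prob_space ?P
    unfolding iid_mvnormal_def by (intro prob_space_PiM prob_space_mvnormal)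
  define I where "I = {..<k} \<times> {..<k} \<times> {1, -1::real}"
  define t where "t = 2 * \<delta> / real k"
  define E where "E = polar_deviation_event n t"
  define B where "B = exp (- real n * t\<^sup>2 / (2048 * (4 * K)\<^sup>2))"
  have "2 * \<delta> / real k \<le> 2 * \<delta> / 1" using \<delta>(1) k by (intro divide_left_mono) auto
  then have t: "0 < t" "t \<le> 4 * K" unfolding t_def using \<delta> k by auto
  have E_sets: "E ` I \<subseteq> sets ?P" unfolding E_def using sets_polar_deviation_event by blast
  have "bad_event r M n k \<inter> space ?P \<subseteq> \<Union>(E ` I)"
    unfolding E_def I_def t_def by (rule bad_event_subset_polar_deviation_events[OF r K MK k n Di_norm \<delta>(1,3)])
  then have "emeasure ?P (bad_event r M n k \<inter> space ?P) \<le> (\<Sum>x\<in>I. emeasure ?P (E x))"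
    using E_sets by (intro order_trans[OF emeasure_mono emeasure_subadditive_finite]) (auto simp: I_def)
  also have "\<dots> \<le> (\<Sum>x\<in>I. ennreal (2 * B))"
    unfolding E_def B_def I_def
    by (intro sum_mono emeasure_polar_deviation_event_le[OF r D_norm _ t])
  also have "\<dots> = ennreal (4 * real k ^ 2 * B)"
    unfolding I_def B_def
    by (simp add: card_cartesian_product power2_eq_square ennreal_of_nat_eq_real_of_nat mult_ac
      flip: ennreal_mult)
  also have "B = exp (- (\<delta>\<^sup>2 / (8192 * K\<^sup>2)) * real n / real k ^ 2)"
    unfolding B_def t_def using K k by (simp add: power2_eq_square field_simps)
  finally show ?thesis
    using P.emeasure_eq_measure K by (simp add: ennreal_le_iff)
qed

end

theorem lemmaA4:
  fixes K M :: real and r :: ereal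
  assumes "K > 0" and "r = 2 \<or> r = \<infinity>" and "M > K"
  shows "\<exists>M' m. M' > 0 \<and> m > 0 \<and>
    (\<forall>n k D. n \<ge> 1 \<longrightarrow> k \<ge> 1 \<longrightarrow> sym_posdef k D \<longrightarrow>
       (case mat_inverse D of None \<Rightarrow> False
          | Some Di \<Rightarrow> max (opnorm r Di) (opnorm r D) \<le> K) \<longrightarrow>
       measure (iid_mvnormal n k D) (bad_event r M n k \<inter> space (iid_mvnormal n k D))
         \<le> M' * real k ^ 2 * exp (- m * real n / real k ^ 2))"
proof (intro exI conjI allI impI)
  define \<delta> where "\<delta> = min ((M - K) / (2 * K * M)) (2 * K)"
  have \<delta>: "\<delta> > 0" "\<delta> \<le> 2 * K" "\<delta> * K \<le> (M - K) / (2 * M)"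
    using assms by (auto simp: \<delta>_def min_def field_simps)
  show "(4::real) > 0" "\<delta>\<^sup>2 / (8192 * K\<^sup>2) > 0" using \<delta> assms by auto
  fix n k :: nat and D :: "real mat"
  assume n: "n \<ge> 1" and k: "k \<ge> 1" and D: "sym_posdef k D"
    and norms: "case mat_inverse D of None \<Rightarrow> False | Some Di \<Rightarrow> max (opnorm r Di) (opnorm r D) \<le> K"
  then obtain Di where Di: "mat_inverse D = Some Di" "opnorm r Di \<le> K" "opnorm r D \<le> K"
    by (auto split: option.splits)
  interpret gaussian_cov k D Di by unfold_locales (fact D, fact Di(1))
  show "measure (iid_mvnormal n k D) (bad_event r M n k \<inter> space (iid_mvnormal n k D))
      \<le> 4 * real k ^ 2 * exp (- (\<delta>\<^sup>2 / (8192 * K\<^sup>2)) * real n / real k ^ 2)"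
    by (rule measure_bad_event_le[OF assms(2,1,3) k n Di(2,3) \<delta>])
qed

end
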